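(* Let $n\ge1$. The restriction of $\Phi$ to $\mathfrak{S}_n(231)$ is a bijection from $\mathfrak{S}_n(231)$ onto $\mathfrak{S}_n(321)$. Moreover, for $\sigma\in\mathfrak{S}_n(231)$, $$(31\text{-}2,\ \mathsf{des},\ \mathsf{asc}^\infty,\ \mathsf{lda}-\mathsf{fmax},\ \mathsf{ldd},\ \mathsf{lval},\ \mathsf{lpk},\ \mathsf{fmax})\,\sigma=(\mathsf{icr},\ \mathsf{drop},\ \mathsf{exc}+\mathsf{fix},\ \mathsf{cda},\ \mathsf{cdd},\ \mathsf{cval},\ \mathsf{cpk},\ \mathsf{fix})\,\Phi(\sigma)$$ $$=(\mathsf{cros},\ \mathsf{exc},\ \mathsf{drop}+\mathsf{fix},\ \mathsf{cdd},\ \mathsf{cda},\ \mathsf{cval},\ \mathsf{cpk},\ \mathsf{fix})\,(\Phi(\sigma))^{-1}.$$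
   Context: The map $\Phi:\mathfrak{S}_n\to\mathfrak{S}_n$: for $\rho\in\mathfrak{S}_n$, a letter $\rho(i)$ is a descent top if $i\le n-1$ and $\rho(i)>\rho(i+1)$, a descent bottom if $i\ge2$ and $\rho(i-1)>\rho(i)$; otherwise a nondescent top (resp. bottom). For $x=\rho(i)$ let $c(x)=\#\{j:i<j<n,\ \rho(j+1)<x<\rho(j)\}$. Let $f$ (resp. $g$) be the increasing word of descent bottoms (resp. nondescent bottoms); $f'$ the arrangement of the descent tops in which each letter $x$ has exactly $c(x)$ larger letters to its left; $g'$ the arrangement of the nondescent tops in which each letter $x$ has exactly $c(x)$ smaller letters to its right. With the two-row array of top row $fg$ and bottom row $f'g'$, $\Phi(\rho)=\tau$ with $\tau(b)=a$ for each column (top $a$, bottom $b$). Statistics of $\sigma$: $(31\text{-}2)\sigma=\#\{(i,j):i+1<j\le n,\ \sigma(i+1)<\sigma(j)<\sigma(i)\}$; $\mathsf{des}\,\sigma=\#\{i\in[n-1]:\sigma(i)>\sigma(i+1)\}$; $\mathsf{asc}^\infty\sigma=\#\{i\in[n]:\sigma(i)<\sigma(i+1)\}$ with $\sigma(n+1)=\infty$ (i.e. $n-\mathsf{des}\,\sigma$). With convention $\sigma(0)=0,\sigma(n+1)=\infty$: $\mathsf{lpk},\mathsf{lval},\mathsf{lda},\mathsf{ldd}$ count $i\in[n]$ with $\sigma(i-1)<\sigma(i)>\sigma(i+1)$, $\sigma(i-1)>\sigma(i)<\sigma(i+1)$, $\sigma(i-1)<\sigma(i)<\sigma(i+1)$,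 $\sigma(i-1)>\sigma(i)>\sigma(i+1)$ respectively; $\mathsf{fmax}$ counts such double ascents that are left-to-right maxima. Statistics of $\pi$: $\mathsf{exc},\mathsf{drop},\mathsf{fix}$ count $i$ with $\pi(i)>i$, $\pi(i)<i$, $\pi(i)=i$; $\mathsf{cpk},\mathsf{cval},\mathsf{cda},\mathsf{cdd}$ count values $x$ with $\pi^{-1}(x)<x>\pi(x)$, $\pi^{-1}(x)>x<\pi(x)$, $\pi^{-1}(x)<x<\pi(x)$, $\pi^{-1}(x)>x>\pi(x)$; $\mathsf{cros}\,\pi=\sum_i\#\{j:j<i<\pi(j)<\pi(i)\text{ or }\pi(i)<\pi(j)\le i<j\}$ and $\mathsf{icr}\,\pi=\mathsf{cros}\,\pi^{-1}$. *)

theory Defs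
  imports Main "HOL-Combinatorics.Permutations"
begin

text \<open>Permutations of [n] are functions nat => nat permuting {1..n}
  (identity outside {1..n}).\<close>

definition avoids231 :: "nat \<Rightarrow> (nat \<Rightarrow> nat) \<Rightarrow> bool" where
  "avoids231 n s \<longleftrightarrow> \<not> (\<exists>i j k. 1 \<le> i \<and> i < j \<and> j < k \<and> k \<le> n \<and> s k < s i \<and> s i < s j)"

definition avoids321 :: "nat \<Rightarrow> (nat \<Rightarrow> nat) \<Rightarrow> bool" where
  "avoids321 n s \<longleftrightarrow> \<not> (\<exists>i j k. 1 \<le> i \<and> i < j \<and> j < k \<and> k \<le> n \<and> s i > s j \<and> s j > s k)"

definition S231 :: "nat \<Rightarrow> (nat \<Rightarrow> nat) set" where
  "S231 n = {s. s permutes {1..n} \<and> avoids231 n s}"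

definition S321 :: "nat \<Rightarrow> (nat \<Rightarrow> nat) set" where
  "S321 n = {s. s permutes {1..n} \<and> avoids321 n s}"

definition desc_tops :: "nat \<Rightarrow> (nat \<Rightarrow> nat) \<Rightarrow> nat set" where
  "desc_tops n r = {r i | i. 1 \<le> i \<and> i \<le> n - 1 \<and> r i > r (Suc i)}"

definition nondesc_tops :: "nat \<Rightarrow> (nat \<Rightarrow> nat) \<Rightarrow> nat set" where
  "nondesc_tops n r = r ` {1..n} - desc_tops n r"

definition desc_bots :: "nat \<Rightarrow> (nat \<Rightarrow> nat) \<Rightarrow> nat set" where
  "desc_bots n r = {r i | i. 2 \<le> i \<and> i \<le> n \<and> r (i - 1) > r i}"

definition nondesc_bots :: "nat \<Rightarrow> (nat \<Rightarrow> nat) \<Rightarrow> nat set" where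
  "nondesc_bots n r = r ` {1..n} - desc_bots n r"

definition cval_phi :: "nat \<Rightarrow> (nat \<Rightarrow> nat) \<Rightarrow> nat \<Rightarrow> nat" where
  "cval_phi n r x = card {j. \<exists>i. 1 \<le> i \<and> i \<le> n \<and> r i = x \<and> i < j \<and> j < n \<and> r (Suc j) < x \<and> x < r j}"

definition f_prime :: "nat \<Rightarrow> (nat \<Rightarrow> nat) \<Rightarrow> nat list" where
  "f_prime n r = (THE w. distinct w \<and> set w = desc_tops n r \<and>
     (\<forall>k < length w. card {j. j < k \<and> w ! j > w ! k} = cval_phi n r (w ! k)))"

definition g_prime :: "nat \<Rightarrow> (nat \<Rightarrow> nat) \<Rightarrow> nat list" where
  "g_prime n r = (THE w. distinct w \<and> set w = nondesc_tops n r \<and>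
     (\<forall>k < length w. card {j. k < j \<and> j < length w \<and> w ! j < w ! k} = cval_phi n r (w ! k)))"

definition Phi :: "nat \<Rightarrow> (nat \<Rightarrow> nat) \<Rightarrow> (nat \<Rightarrow> nat)" where
  "Phi n r = (let top = sorted_list_of_set (desc_bots n r) @ sorted_list_of_set (nondesc_bots n r);
                  bot = f_prime n r @ g_prime n r
              in (\<lambda>b. case map_of (zip bot top) b of Some a \<Rightarrow> a | None \<Rightarrow> b))"

text \<open>Extension with s(0)=0 and s(n+1)=infinity (represented by n+1).\<close>
definition ext :: "nat \<Rightarrow> (nat \<Rightarrow> nat) \<Rightarrow> nat \<Rightarrow> nat" where
  "ext n s i = (if i = 0 then 0 else if i = n + 1 then n + 1 else s i)"

definition st312 :: "nat \<Rightarrow> (nat \<Rightarrow> nat) \<Rightarrow> nat" where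
  "st312 n s = card {(i, j). 1 \<le> i \<and> i + 1 < j \<and> j \<le> n \<and> s (i + 1) < s j \<and> s j < s i}"

definition des :: "nat \<Rightarrow> (nat \<Rightarrow> nat) \<Rightarrow> nat" where
  "des n s = card {i. 1 \<le> i \<and> i \<le> n - 1 \<and> s i > s (i + 1)}"

definition asc_inf :: "nat \<Rightarrow> (nat \<Rightarrow> nat) \<Rightarrow> nat" where
  "asc_inf n s = card {i \<in> {1..n}. ext n s i < ext n s (i + 1)}"

definition lpk :: "nat \<Rightarrow> (nat \<Rightarrow> nat) \<Rightarrow> nat" where
  "lpk n s = card {i \<in> {1..n}. ext n s (i - 1) < ext n s i \<and> ext n s i > ext n s (i + 1)}"

definition lval :: "nat \<Rightarrow> (nat \<Rightarrow> nat) \<Rightarrow> nat" where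
  "lval n s = card {i \<in> {1..n}. ext n s (i - 1) > ext n s i \<and> ext n s i < ext n s (i + 1)}"

definition lda :: "nat \<Rightarrow> (nat \<Rightarrow> nat) \<Rightarrow> nat" where
  "lda n s = card {i \<in> {1..n}. ext n s (i - 1) < ext n s i \<and> ext n s i < ext n s (i + 1)}"

definition ldd :: "nat \<Rightarrow> (nat \<Rightarrow> nat) \<Rightarrow> nat" where
  "ldd n s = card {i \<in> {1..n}. ext n s (i - 1) > ext n s i \<and> ext n s i > ext n s (i + 1)}"

definition fmax :: "nat \<Rightarrow> (nat \<Rightarrow> nat) \<Rightarrow> nat" where
  "fmax n s = card {i \<in> {1..n}. ext n s (i - 1) < ext n s i \<and> ext n s i < ext n s (i + 1)
                     \<and> (\<forall>j. 1 \<le> j \<and> j < i \<longrightarrow> s j < s i)}"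

definition exc :: "nat \<Rightarrow> (nat \<Rightarrow> nat) \<Rightarrow> nat" where
  "exc n p = card {i \<in> {1..n}. p i > i}"

definition drop_st :: "nat \<Rightarrow> (nat \<Rightarrow> nat) \<Rightarrow> nat" where
  "drop_st n p = card {i \<in> {1..n}. p i < i}"

definition fix_st :: "nat \<Rightarrow> (nat \<Rightarrow> nat) \<Rightarrow> nat" where
  "fix_st n p = card {i \<in> {1..n}. p i = i}"

definition cpk :: "nat \<Rightarrow> (nat \<Rightarrow> nat) \<Rightarrow> nat" where
  "cpk n p = card {x \<in> {1..n}. inv p x < x \<and> x > p x}"

definition cval :: "nat \<Rightarrow> (nat \<Rightarrow> nat) \<Rightarrow> nat" where
  "cval n p = card {x \<in> {1..n}. inv p x > x \<and> x < p x}"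

definition cda :: "nat \<Rightarrow> (nat \<Rightarrow> nat) \<Rightarrow> nat" where
  "cda n p = card {x \<in> {1..n}. inv p x < x \<and> x < p x}"

definition cdd :: "nat \<Rightarrow> (nat \<Rightarrow> nat) \<Rightarrow> nat" where
  "cdd n p = card {x \<in> {1..n}. inv p x > x \<and> x > p x}"

definition cros :: "nat \<Rightarrow> (nat \<Rightarrow> nat) \<Rightarrow> nat" where
  "cros n p = (\<Sum>i\<in>{1..n}. card {j \<in> {1..n}. (j < i \<and> i < p j \<and> p j < p i) \<or> (p i < p j \<and> p j \<le> i \<and> i < j)})"

definition icr :: "nat \<Rightarrow> (nat \<Rightarrow> nat) \<Rightarrow> nat" where
  "icr n p = cros n (inv p)"

end

theory Submission
  imports Defs
begin

(* For a 231-avoiding permutation s every number c(x) vanishes, so both rows of the two-row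
   array are sorted: Phi n s is the permutation that maps the descent tops T increasingly onto
   the descent bottoms B and the remaining letters increasingly onto the remaining letters.
   Since every bottom is smaller than its top, (T, B) is a ballot pair: the k-th smallest
   bottom lies below the k-th smallest top.  For a ballot pair this monotone matching drops
   exactly at T and avoids 321, and it is the only 321-avoiding permutation with drop set T
   and drop values B.  Conversely, a 231-avoiding permutation is determined by (T, B) and every
   ballot pair occurs: deleting the largest letter deletes it from T together with the letter
   that follows it from B, and both the position of the largest letter and that letter can be
   read off from #{b in B. b <= x} - #{t in T. t <= x}, the number of descents straddling x.
   Hence Phi is a bijection onto the 321-avoiders.  The statistics are compared letter by
   letter: the linear type of a letter in s (peak, valley, double ascent or descent) and its
   cyclic type in Phi n s are both determined by its membership in T and B; the fixed points of
   Phi n s are the double ascents of s not straddled by any descent, i.e. the left-to-right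
   maxima among them; and 31-2 of s and icr of Phi n s both equal sum T - sum B - #T. *)

section \<open>Descents, tops and bottoms\<close>

text \<open>The permutations in \<open>S231 n\<close> and \<open>S321 n\<close> are the identity outside \<open>{1..n}\<close>.
  Deleting a letter destroys this, so most of the combinatorics is done for bijections of
  \<open>{1..n}\<close>.\<close>

abbreviation is_perm :: "nat \<Rightarrow> (nat \<Rightarrow> nat) \<Rightarrow> bool" where
  "is_perm n s \<equiv> bij_betw s {1..n} {1..n}"

lemma is_perm_mem: "is_perm n s \<Longrightarrow> i \<in> {1..n} \<Longrightarrow> s i \<in> {1..n}"
  using bij_betwE by blast

lemma permutes_is_perm: "t permutes {1..n} \<Longrightarrow> is_perm n t"
  by (rule permutes_imp_bij)

lemma is_perm_eq_iff: "is_perm n s \<Longrightarrow> i \<in> {1..n} \<Longrightarrow> j \<in> {1..n} \<Longrightarrow> s i = s j \<longleftrightarrow> i = j"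
  by (rule inj_on_eq_iff[OF bij_betw_imp_inj_on])

lemma is_perm_preimage:
  assumes "is_perm n s" "y \<in> {1..n}"
  obtains i where "i \<in> {1..n}" "s i = y"
proof -
  have "y \<in> s ` {1..n}" using assms by (simp add: bij_betw_def)
  then show ?thesis using that by blast
qed

lemma card_image_is_perm: "is_perm n s \<Longrightarrow> A \<subseteq> {1..n} \<Longrightarrow> card (s ` A) = card A"
  by (rule card_image, rule inj_on_subset[OF bij_betw_imp_inj_on])

lemma card_filter_is_perm:
  assumes "is_perm n s"
  shows "card {i\<in>{1..n}. P (s i)} = card {x\<in>{1..n}. P x}"
proof -
  have "s ` {i\<in>{1..n}. P (s i)} = {x\<in>{1..n}. P x}"
  proof (intro equalityI subsetI)
    fix x assume "x \<in> s ` {i\<in>{1..n}. P (s i)}"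
    then show "x \<in> {x\<in>{1..n}. P x}" using is_perm_mem[OF assms] by auto
  next
    fix x assume x: "x \<in> {x\<in>{1..n}. P x}"
    then obtain i where "i \<in> {1..n}" "s i = x" using is_perm_preimage[OF assms] by blast
    then show "x \<in> s ` {i\<in>{1..n}. P (s i)}" using x by auto
  qed
  moreover have "{i\<in>{1..n}. P (s i)} \<subseteq> {1..n}" by blast
  ultimately show ?thesis
    using card_image_is_perm[OF assms] by metis
qed

definition descents :: "nat \<Rightarrow> (nat \<Rightarrow> nat) \<Rightarrow> nat set" where
  "descents n s = {i. 1 \<le> i \<and> i < n \<and> s (Suc i) < s i}"

lemma descents_subset: "descents n s \<subseteq> {1..<n}"
  unfolding descents_def by auto

lemma descents_memD: "i \<in> descents n s \<Longrightarrow> i \<in> {1..n} \<and> Suc i \<in> {1..n}"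
  unfolding descents_def by auto

lemma finite_descents [simp]: "finite (descents n s)"
  using descents_subset finite_subset by blast

lemma desc_tops_eq: "desc_tops n s = s ` descents n s"
  unfolding desc_tops_def descents_def by auto

lemma desc_bots_eq: "desc_bots n s = s ` Suc ` descents n s"
proof (intro equalityI subsetI)
  fix x assume "x \<in> desc_bots n s"
  then obtain i where i: "x = s i" "2 \<le> i" "i \<le> n" "s i < s (i - 1)"
    unfolding desc_bots_def by blast
  then have "i - 1 \<in> descents n s" "i = Suc (i - 1)"
    unfolding descents_def by auto
  then show "x \<in> s ` Suc ` descents n s"
    using i(1) by (metis image_eqI)
next
  fix x assume "x \<in> s ` Suc ` descents n s"
  then obtain i where "i \<in> descents n s" "x = s (Suc i)" by blast
  then show "x \<in> desc_bots n s"
    unfolding desc_bots_def descents_def by (intro CollectI exI[of _ "Suc i"]) auto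
qed

lemma finite_desc_tops [simp]: "finite (desc_tops n s)"
  unfolding desc_tops_eq by simp

lemma finite_desc_bots [simp]: "finite (desc_bots n s)"
  unfolding desc_bots_eq by simp

lemma desc_tops_subset: "is_perm n s \<Longrightarrow> desc_tops n s \<subseteq> {1..n}"
  unfolding desc_tops_eq using descents_memD is_perm_mem by blast

lemma desc_bots_subset: "is_perm n s \<Longrightarrow> desc_bots n s \<subseteq> {1..n}"
  unfolding desc_bots_eq using descents_memD is_perm_mem by blast

lemma card_desc_tops:
  assumes "is_perm n s"
  shows "card (desc_tops n s) = card (descents n s)"
  unfolding desc_tops_eq using descents_memD by (intro card_image_is_perm[OF assms]) blast

lemma card_desc_bots:
  assumes "is_perm n s"
  shows "card (desc_bots n s) = card (descents n s)"
proof -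
  have "Suc ` descents n s \<subseteq> {1..n}" using descents_memD by blast
  then show ?thesis
    unfolding desc_bots_eq by (simp add: card_image_is_perm[OF assms] card_image)
qed

lemma desc_tops_iff:
  "is_perm n s \<Longrightarrow> i \<in> {1..n} \<Longrightarrow> s i \<in> desc_tops n s \<longleftrightarrow> i \<in> descents n s"
  unfolding desc_tops_eq using descents_subset is_perm_eq_iff by fastforce

lemma desc_bots_iff:
  assumes "is_perm n s" "i \<in> {1..n}"
  shows "s i \<in> desc_bots n s \<longleftrightarrow> 2 \<le> i \<and> s i < s (i - 1)"
proof
  assume "s i \<in> desc_bots n s"
  then obtain k where k: "k \<in> descents n s" "s (Suc k) = s i"
    unfolding desc_bots_eq by auto
  then have "Suc k = i"
    using is_perm_eq_iff[OF assms(1) _ assms(2)] descents_subset by fastforce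
  then show "2 \<le> i \<and> s i < s (i - 1)"
    using k unfolding descents_def by auto
next
  assume "2 \<le> i \<and> s i < s (i - 1)"
  then have "i - 1 \<in> descents n s" "i = Suc (i - 1)"
    using assms(2) unfolding descents_def by auto
  then show "s i \<in> desc_bots n s"
    unfolding desc_bots_eq by (metis image_eqI)
qed

section \<open>Straddled values and ballot pairs\<close>

definition count_le :: "nat set \<Rightarrow> nat \<Rightarrow> nat" where
  "count_le S x = card {y\<in>S. y \<le> x}"

lemma count_le_Suc:
  assumes "finite S"
  shows "count_le S (Suc x) = count_le S x + (if Suc x \<in> S then 1 else 0)"
proof -
  have "{y\<in>S. y \<le> Suc x} = {y\<in>S. y \<le> x} \<union> (if Suc x \<in> S then {Suc x} else {})"
    by (auto simp: le_Suc_eq)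
  then show ?thesis
    unfolding count_le_def using assms by (auto simp: card_Un_disjoint)
qed

lemma count_le_0: "0 \<notin> S \<Longrightarrow> count_le S 0 = 0"
  unfolding count_le_def by (auto simp: card_eq_0_iff)

lemma count_le_remove:
  assumes "finite S"
  shows "count_le (S - {a}) x = count_le S x - (if a \<in> S \<and> a \<le> x then 1 else 0)"
proof -
  have "{y\<in>S - {a}. y \<le> x} = {y\<in>S. y \<le> x} - {a}" by auto
  then show ?thesis
    unfolding count_le_def using assms by (auto simp: card_Diff_singleton_if)
qed

lemma count_le_remove_gt: "x < a \<Longrightarrow> count_le (S - {a}) x = count_le S x"
  unfolding count_le_def by (rule arg_cong[where f = card]) auto

lemma count_le_pos: "finite S \<Longrightarrow> a \<in> S \<Longrightarrow> a \<le> x \<Longrightarrow> 1 \<le> count_le S x"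
  unfolding count_le_def using card_gt_0_iff[of "{y\<in>S. y \<le> x}"] by auto

lemma count_le_image:
  assumes "inj_on f A"
  shows "count_le (f ` A) x = card {a\<in>A. f a \<le> x}"
proof -
  have "{y\<in>f ` A. y \<le> x} = f ` {a\<in>A. f a \<le> x}" by auto
  then show ?thesis
    unfolding count_le_def using assms by (simp add: card_image inj_on_subset)
qed

definition straddles :: "nat \<Rightarrow> (nat \<Rightarrow> nat) \<Rightarrow> nat \<Rightarrow> nat" where
  "straddles n s x = card {i\<in>descents n s. s (Suc i) \<le> x \<and> x < s i}"

lemma count_le_desc_bots:
  assumes "is_perm n s"
  shows "count_le (desc_bots n s) x = count_le (desc_tops n s) x + straddles n s x"
proof -
  let ?D = "descents n s"
  have inj: "inj_on s ?D" "inj_on (s \<circ> Suc) ?D"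
    using descents_memD is_perm_eq_iff[OF assms] by (auto simp: inj_on_def)
  have "{i\<in>?D. s (Suc i) \<le> x} = {i\<in>?D. s i \<le> x} \<union> {i\<in>?D. s (Suc i) \<le> x \<and> x < s i}"
    by (auto simp: descents_def)
  then have "card {i\<in>?D. s (Suc i) \<le> x} = card {i\<in>?D. s i \<le> x} + straddles n s x"
    unfolding straddles_def by (subst card_Un_disjoint[symmetric]) auto
  then show ?thesis
    unfolding desc_bots_eq desc_tops_eq image_comp count_le_image[OF inj(1)]
      count_le_image[OF inj(2)] by simp
qed

lemma descent_between:
  fixes s :: "nat \<Rightarrow> nat"
  assumes "a < k" "x < s a" "s k \<le> x"
  obtains i where "a \<le> i" "i < k" "x < s i" "s (Suc i) \<le> x"
proof -
  define i where "i = Max {i. a \<le> i \<and> i < k \<and> x < s i}"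
  have fin: "finite {i. a \<le> i \<and> i < k \<and> x < s i}" by simp
  have "a \<in> {i. a \<le> i \<and> i < k \<and> x < s i}" using assms by simp
  then have i: "a \<le> i" "i < k" "x < s i"
    using Max_in[OF fin] unfolding i_def by blast+
  have "s (Suc i) \<le> x"
  proof (cases "Suc i = k")
    case False
    then have "Suc i \<notin> {i. a \<le> i \<and> i < k \<and> x < s i} \<or> Suc i \<le> i"
      using Max_ge[OF fin] unfolding i_def by blast
    then show ?thesis using i False by auto
  qed (use assms in simp)
  then show ?thesis using i that by blast
qed

lemma straddles_pos:
  assumes "1 \<le> a" "a < k" "k \<le> n" "x < s a" "s k \<le> x"
  shows "0 < straddles n s x"
proof -
  obtain i where "a \<le> i" "i < k" "x < s i" "s (Suc i) \<le> x"
    using descent_between[OF assms(2,4,5)] .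
  then have "i \<in> {i\<in>descents n s. s (Suc i) \<le> x \<and> x < s i}"
    using assms unfolding descents_def by auto
  then show ?thesis
    unfolding straddles_def by (auto simp: card_gt_0_iff)
qed

lemma straddles_zero_prefix:
  assumes s: "is_perm n s" and x: "x \<le> n" and z: "straddles n s x = 0"
  shows "s ` {1..x} = {1..x}"
proof -
  have card: "card (s ` {1..x}) = card {1..x}"
    using card_image_is_perm[OF s] x by auto
  have "s i \<le> x" if i: "i \<in> {1..x}" for i
  proof (rule ccontr)
    assume "\<not> s i \<le> x"
    have "\<not> {1..x} \<subseteq> s ` {1..x}"
    proof
      assume "{1..x} \<subseteq> s ` {1..x}"
      then have "{1..x} = s ` {1..x}" using card by (intro card_subset_eq) auto
      then show False using i \<open>\<not> s i \<le> x\<close> by auto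
    qed
    then obtain v where v: "v \<in> {1..x}" "v \<notin> s ` {1..x}" by blast
    obtain k where k: "k \<in> {1..n}" "s k = v"
      using is_perm_preimage[OF s, of v] v x by auto
    have "x < k" using k v by (metis atLeastAtMost_iff imageI not_le)
    then have "0 < straddles n s x"
      using straddles_pos[of i k n x s] i k v \<open>\<not> s i \<le> x\<close> by auto
    then show False using z by simp
  qed
  then have "s ` {1..x} \<subseteq> {1..x}"
    using is_perm_mem[OF s] x by fastforce
  then show ?thesis
    using card by (simp add: card_subset_eq)
qed

lemma straddles_zero_le:
  assumes s: "is_perm n s" and x: "x \<le> n" and z: "straddles n s x = 0"
    and k: "k \<in> {1..n}" "s k \<le> x"
  shows "k \<le> x"
proof -
  have "s k \<in> s ` {1..x}"
    using straddles_zero_prefix[OF s x z] k is_perm_mem[OF s k(1)] by auto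
  then show ?thesis
    using is_perm_eq_iff[OF s] k x by fastforce
qed

text \<open>Equivalently: the \<open>k\<close>-th smallest element of \<open>B\<close> is smaller than the \<open>k\<close>-th smallest
  element of \<open>T\<close>, for every \<open>k\<close>.\<close>

definition ballot :: "nat \<Rightarrow> nat set \<Rightarrow> nat set \<Rightarrow> bool" where
  "ballot n T B \<longleftrightarrow> T \<subseteq> {1..n} \<and> B \<subseteq> {1..n} \<and> card T = card B \<and>
     (\<forall>m. card {t\<in>T. t \<le> m} \<le> card {b\<in>B. b < m})"

lemma ballot_iff_count_le:
  "ballot n T B \<longleftrightarrow> T \<subseteq> {1..n} \<and> B \<subseteq> {1..n} \<and> card T = card B \<and>
     (\<forall>x. count_le T (Suc x) \<le> count_le B x)"
proof -
  have Suc: "{b\<in>B. b < Suc x} = {b\<in>B. b \<le> x}" for x by auto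
  have "card {t\<in>T. t \<le> 0} = 0" if "T \<subseteq> {1..n}"
    using that by (auto simp: card_eq_0_iff)
  then show ?thesis
    unfolding ballot_def count_le_def Suc[symmetric] by (metis not0_implies_Suc zero_le)
qed

lemma ballot_count_le: "ballot n T B \<Longrightarrow> count_le T (Suc x) \<le> count_le B x"
  unfolding ballot_iff_count_le by blast

lemma ballot_finite:
  assumes "ballot n T B"
  shows "finite T" "finite B"
proof -
  have "T \<subseteq> {1..n}" "B \<subseteq> {1..n}" using assms unfolding ballot_def by auto
  then show "finite T" "finite B" by (simp_all add: finite_subset)
qed

lemma ballot_count_le_le:
  assumes "ballot n T B"
  shows "count_le T x \<le> count_le B x"
proof -
  have "count_le T x \<le> count_le T (Suc x)"
    unfolding count_le_def using ballot_finite(1)[OF assms] by (intro card_mono) auto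
  then show ?thesis using ballot_count_le[OF assms] by (rule le_trans)
qed

lemma ballot_max_notin_bots:
  assumes bal: "ballot (Suc n) T B"
  shows "Suc n \<notin> B"
proof
  assume max: "Suc n \<in> B"
  have fin: "finite B" using ballot_finite[OF bal] by simp
  have T: "T \<subseteq> {1..Suc n}" and card: "card T = card B"
    and "card {t\<in>T. t \<le> Suc n} \<le> card {b\<in>B. b < Suc n}"
    using bal unfolding ballot_def by blast+
  moreover have "{t\<in>T. t \<le> Suc n} = T" using T by auto
  ultimately have "card T \<le> card {b\<in>B. b < Suc n}" by simp
  also have "\<dots> \<le> card (B - {Suc n})" by (rule card_mono) (use fin in auto)
  also have "\<dots> < card B" using max fin card_gt_0_iff[of B] by auto
  finally show False using card by simp
qed

lemma ballot_subsets:
  assumes "ballot n T B"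
  shows "T \<subseteq> {1..n}" "B \<subseteq> {1..n}" "card T = card B"
  using assms unfolding ballot_def by blast+

lemma ballot_Suc_bots_subset:
  assumes "ballot (Suc n) T B"
  shows "B \<subseteq> {1..n}"
proof -
  have "{1..Suc n} - {Suc n} = {1..n}" by auto
  then show ?thesis
    using ballot_subsets(2)[OF assms] ballot_max_notin_bots[OF assms] by blast
qed

lemma ballot_desc_tops_bots:
  assumes s: "is_perm n s"
  shows "ballot n (desc_tops n s) (desc_bots n s)"
proof -
  have "card {t\<in>desc_tops n s. t \<le> m} \<le> card {b\<in>desc_bots n s. b < m}" for m
  proof -
    let ?D = "{i\<in>descents n s. s i \<le> m}"
    have "card {t\<in>desc_tops n s. t \<le> m} = card (s ` ?D)"
      unfolding desc_tops_eq by (auto intro!: arg_cong[where f = card])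
    also have "\<dots> = card (s ` Suc ` ?D)"
    proof -
      have "?D \<subseteq> {1..n}" "Suc ` ?D \<subseteq> {1..n}" using descents_memD by blast+
      then show ?thesis by (simp add: card_image_is_perm[OF s] card_image)
    qed
    also have "\<dots> \<le> card {b\<in>desc_bots n s. b < m}"
      by (rule card_mono) (auto simp: desc_bots_eq descents_def)
    finally show ?thesis .
  qed
  then show ?thesis
    unfolding ballot_def using desc_tops_subset[OF s] desc_bots_subset[OF s]
      card_desc_tops[OF s] card_desc_bots[OF s] by auto
qed

lemma avoids321D:
  "avoids321 n t \<Longrightarrow> 1 \<le> i \<Longrightarrow> i < j \<Longrightarrow> j < k \<Longrightarrow> k \<le> n \<Longrightarrow> t j < t i \<Longrightarrow> t k < t j \<Longrightarrow> False"
  unfolding avoids321_def by blast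

lemma avoids231D:
  "avoids231 n s \<Longrightarrow> 1 \<le> i \<Longrightarrow> i < j \<Longrightarrow> j < k \<Longrightarrow> k \<le> n \<Longrightarrow> s k < s i \<Longrightarrow> s i < s j \<Longrightarrow> False"
  unfolding avoids231_def by blast

section \<open>Monotone matchings\<close>

definition matches :: "nat \<Rightarrow> nat set \<Rightarrow> nat set \<Rightarrow> (nat \<Rightarrow> nat) \<Rightarrow> bool" where
  "matches n T B t \<longleftrightarrow> t permutes {1..n} \<and> T \<subseteq> {1..n} \<and> B \<subseteq> {1..n} \<and>
     t ` T = B \<and> t ` ({1..n} - T) = {1..n} - B \<and>
     strict_mono_on T t \<and> strict_mono_on ({1..n} - T) t"

lemma card_less_strict:
  fixes S :: "nat set"
  shows "finite S \<Longrightarrow> a \<in> S \<Longrightarrow> a < b \<Longrightarrow> card {y\<in>S. y < a} < card {y\<in>S. y < b}"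
  by (rule psubset_card_mono) auto

lemma card_less_mono:
  fixes S :: "nat set"
  shows "finite S \<Longrightarrow> a \<le> b \<Longrightarrow> card {y\<in>S. y < a} \<le> card {y\<in>S. y < b}"
  by (rule card_mono) auto

lemma card_less_split:
  fixes S :: "nat set"
  assumes "S \<subseteq> {1..n}"
  shows "card {y\<in>{1..n} - S. y < x} + card {y\<in>S. y < x} = card {y\<in>{1..n}. y < x}"
proof -
  have "{y\<in>{1..n}. y < x} = {y\<in>{1..n} - S. y < x} \<union> {y\<in>S. y < x}" using assms by auto
  moreover have "finite {y\<in>S. y < x}" using assms finite_subset by auto
  ultimately show ?thesis by (subst card_Un_disjoint[symmetric]) auto
qed

lemma card_less_strict_mono_on:
  fixes f :: "nat \<Rightarrow> nat"
  assumes "strict_mono_on S f" "x \<in> S"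
  shows "card {y\<in>f ` S. y < f x} = card {y\<in>S. y < x}"
proof -
  have "{y\<in>f ` S. y < f x} = f ` {y\<in>S. y < x}"
    using strict_mono_on_less[OF assms(1)] assms(2) by auto
  moreover have "inj_on f {y\<in>S. y < x}"
    using strict_mono_on_imp_inj_on[OF assms(1)] by (rule inj_on_subset) auto
  ultimately show ?thesis by (simp add: card_image)
qed

lemma strict_mono_on_onto_unique:
  fixes f g :: "nat \<Rightarrow> nat"
  assumes "strict_mono_on S f" "strict_mono_on S g" "f ` S = g ` S" "finite S" "x \<in> S"
  shows "f x = g x"
proof -
  have fin: "finite (f ` S)" using assms(4) by simp
  have "card {y\<in>f ` S. y < f x} = card {y\<in>f ` S. y < g x}"
    using card_less_strict_mono_on[OF assms(1,5)] card_less_strict_mono_on[OF assms(2,5)]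
    unfolding assms(3) by simp
  moreover have "f x \<in> f ` S" "g x \<in> f ` S" using assms(3,5) by auto
  ultimately show ?thesis
    using card_less_strict[OF fin, of "f x" "g x"] card_less_strict[OF fin, of "g x" "f x"]
    by (metis less_irrefl nat_neq_iff)
qed

lemma matches_unique:
  assumes "matches n T B t1" "matches n T B t2"
  shows "t1 = t2"
proof
  fix x
  have m1: "t1 permutes {1..n}" "strict_mono_on T t1" "strict_mono_on ({1..n} - T) t1"
      "t1 ` T = B" "t1 ` ({1..n} - T) = {1..n} - B"
    and m2: "t2 permutes {1..n}" "strict_mono_on T t2" "strict_mono_on ({1..n} - T) t2"
      "t2 ` T = B" "t2 ` ({1..n} - T) = {1..n} - B"
    and fin: "finite T"
    using assms finite_subset unfolding matches_def by auto
  consider "x \<notin> {1..n}" | "x \<in> T" | "x \<in> {1..n} - T" by blast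
  then show "t1 x = t2 x"
  proof cases
    case 1
    then show ?thesis using m1(1) m2(1) unfolding permutes_def by simp
  next
    case 2
    show ?thesis
      by (rule strict_mono_on_onto_unique[OF m1(2) m2(2) _ fin 2]) (simp add: m1(4) m2(4))
  next
    case 3
    show ?thesis
      by (rule strict_mono_on_onto_unique[OF m1(3) m2(3) _ _ 3]) (simp only: m1(5) m2(5), simp)
  qed
qed

lemma matches_mem_iff:
  "matches n T B t \<Longrightarrow> x \<in> {1..n} \<Longrightarrow> t x \<in> B \<longleftrightarrow> x \<in> T"
  unfolding matches_def by blast

text \<open>The union of two increasing subsequences contains no decreasing subsequence of length 3.\<close>

lemma matches_avoids321:
  assumes "matches n T B t"
  shows "avoids321 n t"
  unfolding avoids321_def
proof clarify
  fix i j k assume h: "1 \<le> i" "i < j" "j < k" "k \<le> n" "t j < t i" "t k < t j"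
  have mono: "strict_mono_on T t" "strict_mono_on ({1..n} - T) t"
    using assms unfolding matches_def by auto
  have "\<not> (a < b \<and> t b < t a)" if "a \<in> {1..n}" "b \<in> {1..n}" "a \<in> T \<longleftrightarrow> b \<in> T" for a b
  proof (cases "a \<in> T")
    case True
    then show ?thesis using strict_mono_onD[OF mono(1), of a b] that by auto
  next
    case False
    then show ?thesis using strict_mono_onD[OF mono(2), of a b] that by auto
  qed
  from this[of i j] this[of j k] this[of i k] h show False by auto
qed

context
  fixes n T B t
  assumes match: "matches n T B t" and bal: "ballot n T B"
begin

lemma matches_top_drop:
  assumes x: "x \<in> T"
  shows "t x < x"
proof (rule ccontr)
  assume "\<not> t x < x"
  have T: "T \<subseteq> {1..n}" "finite T" and B: "finite B"
    using match finite_subset unfolding matches_def by auto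
  have "card {y\<in>B. y < t x} = card {y\<in>T. y < x}"
    using card_less_strict_mono_on[of T t x] match x unfolding matches_def by auto
  moreover have "{y\<in>T. y \<le> x} = insert x {y\<in>T. y < x}" using x by auto
  then have "card {y\<in>T. y \<le> x} = card {y\<in>T. y < x} + 1" using T by simp
  moreover have "card {y\<in>T. y \<le> x} \<le> card {b\<in>B. b < x}"
    using bal unfolding ballot_def by auto
  moreover have "card {b\<in>B. b < x} \<le> card {y\<in>B. y < t x}"
    using card_less_mono[OF B] \<open>\<not> t x < x\<close> by simp
  ultimately show False by simp
qed

lemma matches_nontop_not_drop:
  assumes x: "x \<in> {1..n}" "x \<notin> T"
  shows "x \<le> t x"
proof (rule ccontr)
  assume "\<not> x \<le> t x"
  have T: "T \<subseteq> {1..n}" and B: "B \<subseteq> {1..n}" "finite B"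
    using match finite_subset unfolding matches_def by auto
  have xc: "x \<in> {1..n} - T" using x by auto
  then have tc: "t x \<in> {1..n} - B" using match unfolding matches_def by blast
  have "card {y\<in>{1..n} - B. y < t x} = card {y\<in>{1..n} - T. y < x}"
    using card_less_strict_mono_on[of "{1..n} - T" t x] match xc unfolding matches_def by auto
  moreover have "card {y\<in>{1..n} - B. y < t x} < card {y\<in>{1..n} - B. y < x}"
    using card_less_strict[OF _ tc] \<open>\<not> x \<le> t x\<close> by simp
  moreover have "card {y\<in>T. y \<le> x - 1} \<le> card {b\<in>B. b < x - 1}"
    using bal unfolding ballot_def by auto
  moreover have "card {y\<in>T. y \<le> x - 1} = card {y\<in>T. y < x}"
    using x by (intro arg_cong[where f = card]) auto
  moreover have "card {b\<in>B. b < x - 1} \<le> card {y\<in>B. y < x}"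
    by (rule card_less_mono[OF B(2)]) simp
  ultimately show False
    using card_less_split[OF B(1), of x] card_less_split[OF T, of x] by linarith
qed

lemma matches_drop_iff: "x \<in> {1..n} \<Longrightarrow> t x < x \<longleftrightarrow> x \<in> T"
  using matches_top_drop matches_nontop_not_drop by (meson not_less)

lemma matches_fixed_iff:
  assumes x: "x \<in> {1..n}"
  shows "t x = x \<longleftrightarrow> x \<notin> T \<and> x \<notin> B \<and> card {y\<in>B. y < x} = card {y\<in>T. y < x}"
proof -
  have T: "T \<subseteq> {1..n}" and B: "B \<subseteq> {1..n}"
    using match unfolding matches_def by auto
  have split: "card {y\<in>{1..n} - B. y < x} + card {y\<in>B. y < x}
      = card {y\<in>{1..n} - T. y < x} + card {y\<in>T. y < x}"
    using card_less_split[OF B, of x] card_less_split[OF T, of x] by simp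
  have rank: "card {y\<in>{1..n} - B. y < t x} = card {y\<in>{1..n} - T. y < x}"
    if "x \<notin> T"
    using card_less_strict_mono_on[of "{1..n} - T" t x] match x that unfolding matches_def by auto
  show ?thesis
  proof
    assume fixed: "t x = x"
    then have "x \<notin> T" using matches_top_drop by force
    moreover have "x \<notin> B" using matches_mem_iff[OF match x] fixed \<open>x \<notin> T\<close> by simp
    ultimately show "x \<notin> T \<and> x \<notin> B \<and> card {y\<in>B. y < x} = card {y\<in>T. y < x}"
      using rank split fixed by simp
  next
    assume h: "x \<notin> T \<and> x \<notin> B \<and> card {y\<in>B. y < x} = card {y\<in>T. y < x}"
    then have tx: "t x \<in> {1..n} - B" and xB: "x \<in> {1..n} - B"
      using match x unfolding matches_def by blast+
    have eq: "card {y\<in>{1..n} - B. y < t x} = card {y\<in>{1..n} - B. y < x}"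
      using rank split h by simp
    show "t x = x"
      using card_less_strict[OF _ tx, of x] card_less_strict[OF _ xB, of "t x"] eq
      by (metis finite_Diff finite_atLeastAtMost less_irrefl nat_neq_iff)
  qed
qed

end

section \<open>321-avoiding permutations are monotone matchings\<close>

definition drops :: "nat \<Rightarrow> (nat \<Rightarrow> nat) \<Rightarrow> nat set" where
  "drops n t = {x\<in>{1..n}. t x < x}"

lemma ballot_drops:
  assumes t: "t permutes {1..n}"
  shows "ballot n (drops n t) (t ` drops n t)"
proof -
  have "drops n t \<subseteq> {1..n}" unfolding drops_def by auto
  then have sub: "drops n t \<subseteq> {1..n}" "t ` drops n t \<subseteq> {1..n}"
    using permutes_image[OF t] by blast+
  have inj: "inj_on t A" for A using t by (rule permutes_inj_on)
  have fin: "finite (t ` drops n t)" using sub(2) by (rule finite_subset) simp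
  have "card {x\<in>drops n t. x \<le> m} \<le> card {y\<in>t ` drops n t. y < m}" for m
  proof -
    have "card {x\<in>drops n t. x \<le> m} = card (t ` {x\<in>drops n t. x \<le> m})"
      using inj by (simp add: card_image)
    also have "\<dots> \<le> card {y\<in>t ` drops n t. y < m}"
      by (rule card_mono) (use fin in \<open>auto simp: drops_def\<close>)
    finally show ?thesis .
  qed
  moreover have "card (t ` drops n t) = card (drops n t)" using inj by (simp add: card_image)
  ultimately show ?thesis
    unfolding ballot_def using sub by simp
qed

context
  fixes n t
  assumes t: "t permutes {1..n}" and av: "avoids321 n t"
begin

text \<open>If two drops formed an inversion, every letter to the left of the first would be smaller
  than it, which leaves too little room below it.\<close>

lemma strict_mono_on_drops: "strict_mono_on (drops n t) t"
proof (rule strict_mono_onI, rule ccontr)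
  fix a b assume a: "a \<in> drops n t" and b: "b \<in> drops n t" and ab: "a < b" and "\<not> t a < t b"
  have inj: "x \<noteq> y \<Longrightarrow> t x \<noteq> t y" for x y using permutes_inj[OF t] by (auto dest: injD)
  have ba: "t b < t a" using \<open>\<not> t a < t b\<close> inj[of a b] ab by simp
  have ar: "a \<in> {1..n}" "t a < a" and br: "b \<in> {1..n}" "t b < b"
    using a b unfolding drops_def by auto
  have tb1: "1 \<le> t b" using is_perm_mem[OF permutes_is_perm[OF t] br(1)] by simp
  have "t ` {1..<a} \<subseteq> {1..<t a} - {t b}"
  proof
    fix y assume "y \<in> t ` {1..<a}"
    then obtain c where c: "c \<in> {1..<a}" "y = t c" by blast
    have "\<not> t a < t c" using avoids321D[OF av, of c a b] c ab ba br by auto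
    moreover have "t c \<noteq> t a" "t c \<noteq> t b" using inj c ab by auto
    moreover have "1 \<le> t c" using is_perm_mem[OF permutes_is_perm[OF t], of c] c ar by auto
    ultimately show "y \<in> {1..<t a} - {t b}" using c by auto
  qed
  then have "card (t ` {1..<a}) \<le> card ({1..<t a} - {t b})" by (rule card_mono[rotated]) simp
  moreover have "card (t ` {1..<a}) = a - 1" using permutes_inj_on[OF t] by (simp add: card_image)
  moreover have "card ({1..<t a} - {t b}) = t a - 2" using tb1 ba by simp
  ultimately show False using ar ba tb1 by linarith
qed

lemma strict_mono_on_nondrops: "strict_mono_on ({1..n} - drops n t) t"
proof (rule strict_mono_onI, rule ccontr)
  fix a b assume a: "a \<in> {1..n} - drops n t" and b: "b \<in> {1..n} - drops n t"
    and ab: "a < b" and "\<not> t a < t b"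
  have inj: "x \<noteq> y \<Longrightarrow> t x \<noteq> t y" for x y using permutes_inj[OF t] by (auto dest: injD)
  have ba: "t b < t a" using \<open>\<not> t a < t b\<close> inj[of a b] ab by simp
  have ar: "a \<in> {1..n}" "a \<le> t a" and br: "b \<in> {1..n}" "b \<le> t b"
    using a b unfolding drops_def by auto
  have tan: "t a \<le> n" using is_perm_mem[OF permutes_is_perm[OF t] ar(1)] by simp
  have "t ` {b<..n} \<subseteq> {t b<..n} - {t a}"
  proof
    fix y assume "y \<in> t ` {b<..n}"
    then obtain c where c: "c \<in> {b<..n}" "y = t c" by blast
    have "\<not> t c < t b" using avoids321D[OF av, of a b c] c ab ba ar by auto
    moreover have "t c \<noteq> t a" "t c \<noteq> t b" using inj c ab by auto
    moreover have "t c \<le> n" using is_perm_mem[OF permutes_is_perm[OF t], of c] c br by auto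
    ultimately show "y \<in> {t b<..n} - {t a}" using c by auto
  qed
  then have "card (t ` {b<..n}) \<le> card ({t b<..n} - {t a})" by (rule card_mono[rotated]) simp
  moreover have "card (t ` {b<..n}) = n - b" using permutes_inj_on[OF t] by (simp add: card_image)
  moreover have "card ({t b<..n} - {t a}) = n - t b - 1" using tan ba by simp
  ultimately show False using br ba tan by linarith
qed

lemma matches_drops: "matches n (drops n t) (t ` drops n t) t"
proof -
  have sub: "drops n t \<subseteq> {1..n}" unfolding drops_def by auto
  have "t ` ({1..n} - drops n t) = t ` {1..n} - t ` drops n t"
    by (rule inj_on_image_set_diff[OF permutes_inj_on[OF t]]) (use sub in auto)
  then have "t ` ({1..n} - drops n t) = {1..n} - t ` drops n t"
    by (simp only: permutes_image[OF t])
  moreover have "t ` drops n t \<subseteq> {1..n}"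
    using sub permutes_image[OF t] by blast
  ultimately show ?thesis
    unfolding matches_def using t sub strict_mono_on_drops strict_mono_on_nondrops by blast
qed

end

section \<open>\<open>Phi\<close> on 231-avoiding permutations\<close>

lemma sorted_list_of_set_nth_less:
  "i < j \<Longrightarrow> j < length (sorted_list_of_set S) \<Longrightarrow> sorted_list_of_set S ! i < sorted_list_of_set S ! j"
  using sorted_wrt_nth_less[OF strict_sorted_list_of_set] by blast

lemma sorted_list_of_set_nth_less_iff:
  "i < length (sorted_list_of_set S) \<Longrightarrow> j < length (sorted_list_of_set S) \<Longrightarrow>
    sorted_list_of_set S ! i < sorted_list_of_set S ! j \<longleftrightarrow> i < j"
  using sorted_list_of_set_nth_less by (metis less_asym nat_neq_iff)

lemma mem_iff_sorted_list_of_set_nth: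
  "finite S \<Longrightarrow> x \<in> S \<longleftrightarrow> (\<exists>k < card S. x = sorted_list_of_set S ! k)"
  by (metis in_set_conv_nth length_sorted_list_of_set set_sorted_list_of_set)

lemma image_sorted_list_of_set_nth:
  "finite S \<Longrightarrow> (\<lambda>k. sorted_list_of_set S ! k) ` {..<card S} = S"
  using mem_iff_sorted_list_of_set_nth by auto

lemma strict_mono_on_of_sorted_lists:
  fixes S S' :: "nat set"
  assumes fin: "finite S" "finite S'" and card: "card S = card S'"
    and nth: "\<And>k. k < card S \<Longrightarrow> t (sorted_list_of_set S ! k) = sorted_list_of_set S' ! k"
  shows "t ` S = S'" "strict_mono_on S t"
proof -
  have "t ` S = t ` (\<lambda>k. sorted_list_of_set S ! k) ` {..<card S}"
    using image_sorted_list_of_set_nth[OF fin(1)] by simp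
  also have "\<dots> = (\<lambda>k. sorted_list_of_set S' ! k) ` {..<card S'}"
    using nth card by (auto simp: image_image)
  also have "\<dots> = S'"
    using image_sorted_list_of_set_nth[OF fin(2)] by simp
  finally show "t ` S = S'" .
  show "strict_mono_on S t"
  proof (rule strict_mono_onI)
    fix a b assume a: "a \<in> S" and b: "b \<in> S" and ab: "a < b"
    obtain i where i: "i < card S" "a = sorted_list_of_set S ! i"
      using mem_iff_sorted_list_of_set_nth[OF fin(1)] a by blast
    obtain j where j: "j < card S" "b = sorted_list_of_set S ! j"
      using mem_iff_sorted_list_of_set_nth[OF fin(1)] b by blast
    have "i < j" using sorted_list_of_set_nth_less_iff[of i S j] i j ab by simp
    then show "t a < t b" using nth i j card sorted_list_of_set_nth_less[of i j S'] by simp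
  qed
qed

lemma matches_of_sorted_lists:
  fixes n :: nat and T B :: "nat set"
  defines "T' \<equiv> {1..n} - T" and "B' \<equiv> {1..n} - B"
  assumes T: "T \<subseteq> {1..n}" and B: "B \<subseteq> {1..n}" and card: "card T = card B"
    and tops: "\<And>k. k < card T \<Longrightarrow> t (sorted_list_of_set T ! k) = sorted_list_of_set B ! k"
    and rest: "\<And>k. k < card T' \<Longrightarrow> t (sorted_list_of_set T' ! k) = sorted_list_of_set B' ! k"
    and outside: "\<And>x. x \<notin> {1..n} \<Longrightarrow> t x = x"
  shows "matches n T B t"
proof -
  have fin: "finite T" "finite B" using T B finite_subset by auto
  have card': "card T' = card B'"
    unfolding T'_def B'_def using card T B fin by (simp add: card_Diff_subset)
  have fin': "finite T'" "finite B'" unfolding T'_def B'_def by auto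
  note on_T = strict_mono_on_of_sorted_lists[OF fin card tops]
  note on_T' = strict_mono_on_of_sorted_lists[OF fin' card' rest]
  have "t ` {1..n} = t ` T \<union> t ` T'"
    unfolding T'_def using T by (metis Diff_partition image_Un)
  also have "\<dots> = B \<union> ({1..n} - B)"
    by (simp only: on_T(1) on_T'(1) B'_def)
  also have "\<dots> = {1..n}"
    using B by auto
  finally have "bij_betw t {1..n} {1..n}"
    by (simp add: bij_betw_def eq_card_imp_inj_on)
  then have "t permutes {1..n}" using outside by (rule bij_imp_permutes)
  then show ?thesis
    unfolding matches_def using T B on_T on_T' unfolding T'_def B'_def by blast
qed

text \<open>In a 231-avoiding permutation no descent lies to the right of a letter and straddles
  it, so the numbers \<open>c(x)\<close> all vanish.\<close>

lemma cval_phi_avoids231: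
  assumes "avoids231 n s"
  shows "cval_phi n s x = 0"
proof -
  have "\<not> (\<exists>i. 1 \<le> i \<and> i \<le> n \<and> s i = x \<and> i < j \<and> j < n \<and> s (Suc j) < x \<and> x < s j)" for j
    using avoids231D[OF assms, of _ j "Suc j"] by auto
  then have "{j. \<exists>i. 1 \<le> i \<and> i \<le> n \<and> s i = x \<and> i < j \<and> j < n \<and> s (Suc j) < x \<and> x < s j} = {}"
    by blast
  then show ?thesis unfolding cval_phi_def by (simp only: card.empty)
qed

lemma f_prime_avoids231:
  assumes av: "avoids231 n s"
  shows "f_prime n s = sorted_list_of_set (desc_tops n s)"
  unfolding f_prime_def
proof (rule the_equality)
  let ?w = "sorted_list_of_set (desc_tops n s)"
  have "{j. j < k \<and> ?w ! j > ?w ! k} = {}" if "k < length ?w" for k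
    using sorted_list_of_set_nth_less[OF _ that] by (auto dest: less_asym)
  then show "distinct ?w \<and> set ?w = desc_tops n s \<and>
      (\<forall>k < length ?w. card {j. j < k \<and> ?w ! j > ?w ! k} = cval_phi n s (?w ! k))"
    by (simp add: cval_phi_avoids231[OF av])
next
  fix w assume w: "distinct w \<and> set w = desc_tops n s \<and>
    (\<forall>k < length w. card {j. j < k \<and> w ! j > w ! k} = cval_phi n s (w ! k))"
  have "sorted_wrt (<) w" unfolding sorted_wrt_iff_nth_less
  proof (intro allI impI)
    fix i j assume ij: "i < j" "j < length w"
    have "card {i. i < j \<and> w ! i > w ! j} = 0"
      using w ij cval_phi_avoids231[OF av] by simp
    then have "\<not> w ! i > w ! j" using ij by auto
    moreover have "w ! i \<noteq> w ! j" using w ij nth_eq_iff_index_eq by fastforce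
    ultimately show "w ! i < w ! j" by simp
  qed
  then show "w = sorted_list_of_set (desc_tops n s)"
    using strict_sorted_equal[OF strict_sorted_list_of_set, of w "desc_tops n s"] w by simp
qed

lemma g_prime_avoids231:
  assumes av: "avoids231 n s"
  shows "g_prime n s = sorted_list_of_set (nondesc_tops n s)"
  unfolding g_prime_def
proof (rule the_equality)
  let ?w = "sorted_list_of_set (nondesc_tops n s)"
  have fin: "finite (nondesc_tops n s)" unfolding nondesc_tops_def by simp
  have "{j. k < j \<and> j < length ?w \<and> ?w ! j < ?w ! k} = {}" for k
    using sorted_list_of_set_nth_less[of k _ "nondesc_tops n s"] by (auto dest: less_asym)
  then show "distinct ?w \<and> set ?w = nondesc_tops n s \<and>
      (\<forall>k < length ?w. card {j. k < j \<and> j < length ?w \<and> ?w ! j < ?w ! k} = cval_phi n s (?w ! k))"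
    using fin by (simp add: cval_phi_avoids231[OF av])
next
  fix w assume w: "distinct w \<and> set w = nondesc_tops n s \<and>
    (\<forall>k < length w. card {j. k < j \<and> j < length w \<and> w ! j < w ! k} = cval_phi n s (w ! k))"
  have "sorted_wrt (<) w" unfolding sorted_wrt_iff_nth_less
  proof (intro allI impI)
    fix i j assume ij: "i < j" "j < length w"
    have "card {j. i < j \<and> j < length w \<and> w ! j < w ! i} = 0"
      using w ij cval_phi_avoids231[OF av] by simp
    then have "\<not> w ! j < w ! i" using ij by auto
    moreover have "w ! i \<noteq> w ! j" using w ij nth_eq_iff_index_eq by fastforce
    ultimately show "w ! i < w ! j" by simp
  qed
  then show "w = sorted_list_of_set (nondesc_tops n s)"
    using strict_sorted_equal[OF strict_sorted_list_of_set, of w "nondesc_tops n s"] w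
    unfolding nondesc_tops_def by simp
qed

lemma Phi_matches:
  assumes s: "s permutes {1..n}" and av: "avoids231 n s"
  shows "matches n (desc_tops n s) (desc_bots n s) (Phi n s)"
proof -
  let ?T = "desc_tops n s" and ?B = "desc_bots n s"
  let ?xs = "sorted_list_of_set ?T" and ?ys = "sorted_list_of_set ({1..n} - ?T)"
    and ?us = "sorted_list_of_set ?B" and ?vs = "sorted_list_of_set ({1..n} - ?B)"
  have perm: "is_perm n s" using s by (rule permutes_is_perm)
  have T: "?T \<subseteq> {1..n}" and B: "?B \<subseteq> {1..n}"
    using desc_tops_subset[OF perm] desc_bots_subset[OF perm] .
  have card: "card ?T = card ?B"
    using card_desc_tops[OF perm] card_desc_bots[OF perm] by simp
  have card': "card ({1..n} - ?T) = card ({1..n} - ?B)"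
    using card T B by (simp add: card_Diff_subset)
  have len: "length ?xs = length ?us" "length ?ys = length ?vs"
    using card card' by simp_all
  have img: "s ` {1..n} = {1..n}" using s by (rule permutes_image)
  have Phi_eq: "Phi n s = (\<lambda>b. case (map_of (zip ?ys ?vs) ++ map_of (zip ?xs ?us)) b of
      Some a \<Rightarrow> a | None \<Rightarrow> b)"
    unfolding Phi_def Let_def f_prime_avoids231[OF av] g_prime_avoids231[OF av]
      nondesc_tops_def nondesc_bots_def img using len(1) by simp
  have notin: "map_of (zip ?xs ?us) x = None" if "x \<notin> ?T" for x
    using that len(1) by (simp add: map_of_zip_is_None)
  show ?thesis
  proof (rule matches_of_sorted_lists[OF T B card])
    fix k assume "k < card ?T"
    then show "Phi n s (?xs ! k) = ?us ! k"
      unfolding Phi_eq using len(1) by (simp add: map_of_zip_nth)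
  next
    fix k assume k: "k < card ({1..n} - ?T)"
    then have "?ys ! k \<notin> ?T"
      using nth_mem[of k ?ys] by simp
    then show "Phi n s (?ys ! k) = ?vs ! k"
      unfolding Phi_eq using notin k len(2) by (simp add: map_add_def map_of_zip_nth)
  next
    fix x assume "x \<notin> {1..n}"
    then have "x \<notin> ?T" "x \<notin> set ?ys" using T by auto
    moreover have "map_of (zip ?ys ?vs) x = None"
      using map_of_zip_is_None[OF len(2)] \<open>x \<notin> set ?ys\<close> by blast
    ultimately show "Phi n s x = x"
      unfolding Phi_eq using notin by (simp add: map_add_def)
  qed
qed

section \<open>Removing and inserting the largest letter\<close>

definition delete_at :: "nat \<Rightarrow> (nat \<Rightarrow> nat) \<Rightarrow> nat \<Rightarrow> nat" where
  "delete_at p s = (\<lambda>i. s (if i < p then i else Suc i))"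

definition insert_at :: "nat \<Rightarrow> nat \<Rightarrow> (nat \<Rightarrow> nat) \<Rightarrow> nat \<Rightarrow> nat" where
  "insert_at p N s = (\<lambda>i. if i = p then N else s (if i < p then i else i - 1))"

lemma insert_at_delete_at: "s p = N \<Longrightarrow> insert_at p N (delete_at p s) = s"
  unfolding insert_at_def delete_at_def by (auto simp: fun_eq_iff)

lemma insert_at_cong:
  assumes "\<And>i. i \<in> {1..n} \<Longrightarrow> s1 i = s2 i" "p \<in> {1..Suc n}" "i \<in> {1..Suc n}"
  shows "insert_at p N s1 i = insert_at p N s2 i"
proof -
  consider "i < p" | "i = p" | "p < i" by linarith
  then show ?thesis
  proof cases
    case 3
    then have "i - 1 \<in> {1..n}" using assms(2,3) by auto
    then show ?thesis using 3 assms(1) unfolding insert_at_def by simp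
  qed (use assms in \<open>auto simp: insert_at_def\<close>)
qed

lemma bij_betw_skip:
  "p \<in> {1..Suc n} \<Longrightarrow> bij_betw (\<lambda>i. if i < p then i else Suc i) {1..n} ({1..Suc n} - {p})"
  by (rule bij_betw_byWitness[where f' = "\<lambda>i. if i < p then i else i - 1"]) auto

lemma bij_betw_unskip:
  "p \<in> {1..Suc n} \<Longrightarrow> bij_betw (\<lambda>i. if i < p then i else i - 1) ({1..Suc n} - {p}) {1..n}"
  by (rule bij_betw_byWitness[where f' = "\<lambda>i. if i < p then i else Suc i"]) auto

lemma is_perm_delete_at:
  assumes s: "is_perm (Suc n) s" and p: "p \<in> {1..Suc n}" "s p = Suc n"
  shows "is_perm n (delete_at p s)"
proof -
  have "bij_betw s ({1..Suc n} - {p}) ({1..Suc n} - {Suc n})"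
    using p by (intro bij_betw_DiffI[OF s]) auto
  then have "bij_betw (s \<circ> (\<lambda>i. if i < p then i else Suc i)) {1..n} ({1..Suc n} - {Suc n})"
    by (rule bij_betw_trans[OF bij_betw_skip[OF p(1)]])
  moreover have "{1..Suc n} - {Suc n} = {1..n}" by auto
  ultimately show ?thesis
    by (simp add: delete_at_def comp_def)
qed

lemma is_perm_insert_at:
  assumes s: "is_perm n s" and p: "p \<in> {1..Suc n}"
  shows "is_perm (Suc n) (insert_at p (Suc n) s)"
proof -
  let ?t = "insert_at p (Suc n) s"
  have "bij_betw (s \<circ> (\<lambda>i. if i < p then i else i - 1)) ({1..Suc n} - {p}) {1..n}"
    by (rule bij_betw_trans[OF bij_betw_unskip[OF p] s])
  then have "bij_betw ?t ({1..Suc n} - {p}) {1..n}"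
    by (rule bij_betw_cong[THEN iffD1, rotated]) (simp add: insert_at_def)
  then have "bij_betw ?t (({1..Suc n} - {p}) \<union> {p}) ({1..n} \<union> {?t p})"
    by (rule notIn_Un_bij_betw[rotated 2]) (simp_all add: insert_at_def)
  moreover have "({1..Suc n} - {p}) \<union> {p} = {1..Suc n}" "{1..n} \<union> {?t p} = {1..Suc n}"
    using p by (auto simp: insert_at_def)
  ultimately show ?thesis by simp
qed

lemma avoids231_delete_at:
  assumes av: "avoids231 (Suc n) s"
  shows "avoids231 n (delete_at p s)"
  unfolding avoids231_def
proof clarify
  fix i j k assume h: "1 \<le> i" "i < j" "j < k" "k \<le> n"
    "delete_at p s k < delete_at p s i" "delete_at p s i < delete_at p s j"
  let ?f = "\<lambda>x. if x < p then x else Suc x"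
  have "1 \<le> ?f i" "?f i < ?f j" "?f j < ?f k" "?f k \<le> Suc n" using h by auto
  then show False
    using avoids231D[OF av, of "?f i" "?f j" "?f k"] h unfolding delete_at_def by blast
qed

lemma avoids231_insert_at:
  assumes av: "avoids231 n s" and p: "1 \<le> p" "p \<le> Suc n"
    and sep: "\<And>i k. 1 \<le> i \<Longrightarrow> i < p \<Longrightarrow> p \<le> k \<Longrightarrow> k \<le> n \<Longrightarrow> s i < s k"
    and bound: "\<And>i. i \<in> {1..n} \<Longrightarrow> s i < Suc n"
  shows "avoids231 (Suc n) (insert_at p (Suc n) s)"
  unfolding avoids231_def
proof clarify
  let ?t = "insert_at p (Suc n) s" and ?g = "\<lambda>x. if x < p then x else x - 1"
  fix i j k assume h: "1 \<le> i" "i < j" "j < k" "k \<le> Suc n" "?t k < ?t i" "?t i < ?t j"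
  have t: "x \<noteq> p \<Longrightarrow> ?t x = s (?g x)" for x unfolding insert_at_def by simp
  have below: "?t x < Suc n" if "x \<in> {1..Suc n}" "x \<noteq> p" for x
    using bound[of "?g x"] that p t by fastforce
  have tp: "?t p = Suc n" unfolding insert_at_def by simp
  consider "k = p" | "i = p" | "j = p" | "i \<noteq> p" "j \<noteq> p" "k \<noteq> p" by blast
  then show False
  proof cases
    case 1 then show ?thesis using h tp below[of i] by auto
  next
    case 2 then show ?thesis using h tp below[of j] by auto
  next
    case 3
    then have "s i < s (k - 1)" using sep[of i "k - 1"] h by auto
    then show ?thesis using h t[of i] t[of k] 3 by auto
  next
    case 4
    have "1 \<le> ?g i" "?g i < ?g j" "?g j < ?g k" "?g k \<le> n" using h 4 p by auto
    then show ?thesis using avoids231D[OF av, of "?g i" "?g j" "?g k"] h t 4 by auto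
  qed
qed

lemma descents_insert_at:
  assumes p: "1 \<le> p" "p \<le> Suc n" and bound: "\<And>i. i \<in> {1..n} \<Longrightarrow> s i < Suc n"
  shows "descents (Suc n) (insert_at p (Suc n) s) =
    {i\<in>descents n s. Suc i < p} \<union> (if p \<le> n then {p} else {}) \<union> Suc ` {i\<in>descents n s. p \<le> i}"
    (is "?L = ?R")
proof (intro equalityI subsetI)
  fix i assume "i \<in> ?L"
  then have i: "1 \<le> i" "i < Suc n" "insert_at p (Suc n) s (Suc i) < insert_at p (Suc n) s i"
    unfolding descents_def by auto
  consider "Suc i < p" | "Suc i = p" | "i = p" | "p < i" by linarith
  then show "i \<in> ?R"
  proof cases
    case 4
    then have "i - 1 \<in> {i\<in>descents n s. p \<le> i}"
      using i p unfolding insert_at_def descents_def by auto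
    then show ?thesis using 4 by (auto intro!: image_eqI[of _ _ "i - 1"])
  qed (use i p bound[of i] in \<open>auto simp: insert_at_def descents_def\<close>)
next
  fix i assume "i \<in> ?R"
  then show "i \<in> ?L"
    using p bound[of p] unfolding insert_at_def descents_def by (auto split: if_splits)
qed

lemma desc_tops_bots_insert_at:
  assumes p: "1 \<le> p" "p \<le> Suc n" and bound: "\<And>i. i \<in> {1..n} \<Longrightarrow> s i < Suc n"
    and asc: "2 \<le> p \<Longrightarrow> p \<le> n \<Longrightarrow> s (p - 1) < s p"
  shows "desc_tops (Suc n) (insert_at p (Suc n) s) = desc_tops n s \<union> (if p \<le> n then {Suc n} else {})"
    and "desc_bots (Suc n) (insert_at p (Suc n) s) = desc_bots n s \<union> (if p \<le> n then {s p} else {})"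
proof -
  let ?t = "insert_at p (Suc n) s"
  let ?L = "{i\<in>descents n s. Suc i < p}" and ?R = "{i\<in>descents n s. p \<le> i}"
    and ?P = "if p \<le> n then {p} else {}"
  have "p - 1 \<notin> descents n s"
    using asc p unfolding descents_def by (cases "2 \<le> p"; cases "p \<le> n") auto
  then have "Suc i < p \<or> p \<le> i" if "i \<in> descents n s" for i
    using that by (cases "Suc i = p") auto
  then have split: "descents n s = ?L \<union> ?R" by blast
  have D: "descents (Suc n) ?t = ?L \<union> ?P \<union> Suc ` ?R"
    by (rule descents_insert_at[OF p bound])
  have tops: "?t ` ?L = s ` ?L" "?t ` Suc ` ?R = s ` ?R" "?t ` ?P = (if p \<le> n then {Suc n} else {})"
    unfolding image_image by (auto simp: insert_at_def intro!: image_cong)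
  have bots: "?t ` Suc ` ?L = s ` Suc ` ?L" "?t ` Suc ` Suc ` ?R = s ` Suc ` ?R"
    "?t ` Suc ` ?P = (if p \<le> n then {s p} else {})"
    unfolding image_image by (auto simp: insert_at_def intro!: image_cong)
  show "desc_tops (Suc n) ?t = desc_tops n s \<union> (if p \<le> n then {Suc n} else {})"
    unfolding desc_tops_eq D image_Un tops by (subst (2) split) (auto simp only: image_Un Un_ac)
  show "desc_bots (Suc n) ?t = desc_bots n s \<union> (if p \<le> n then {s p} else {})"
    unfolding desc_bots_eq D image_Un bots by (subst (3) split) (auto simp only: image_Un Un_ac)
qed

section \<open>A 231-avoiding permutation is determined by its descent tops and bottoms\<close>

context
  fixes n s p
  assumes perm: "is_perm (Suc n) s" and av: "avoids231 (Suc n) s"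
    and max: "s p = Suc n" and p: "1 \<le> p" "p \<le> n"
begin

lemma left_of_max_less_right:
  assumes "1 \<le> i" "i < p" "p < k" "k \<le> Suc n"
  shows "s i < s k"
proof -
  have i: "i \<in> {1..Suc n}" and k: "k \<in> {1..Suc n}" and pr: "p \<in> {1..Suc n}"
    using assms p by auto
  have "s i \<noteq> s p" "s k \<noteq> s i"
    using is_perm_eq_iff[OF perm i pr] is_perm_eq_iff[OF perm k i] assms by auto
  then have "s i < s p" using is_perm_mem[OF perm i] max by auto
  then show ?thesis
    using avoids231D[OF av, of i p k] assms \<open>s k \<noteq> s i\<close> by (meson linorder_neqE_nat)
qed

lemma left_of_max_below:
  assumes i: "i \<in> {1..<p}"
  shows "s i < p"
proof -
  have ir: "i \<in> {1..Suc n}" using i p by auto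
  have "{1..<s i} \<subseteq> s ` ({1..<p} - {i})"
  proof
    fix v assume v: "v \<in> {1..<s i}"
    then have "v \<in> {1..Suc n}" using is_perm_mem[OF perm ir] by auto
    then obtain k where k: "k \<in> {1..Suc n}" "s k = v" using is_perm_preimage[OF perm] by blast
    have "k \<noteq> i" "k \<noteq> p" using k v max is_perm_mem[OF perm ir] by auto
    moreover have "\<not> p < k" using left_of_max_less_right[of i k] i k v by auto
    ultimately show "v \<in> s ` ({1..<p} - {i})" using k by auto
  qed
  then have "card {1..<s i} \<le> card (s ` ({1..<p} - {i}))" by (rule card_mono[rotated]) simp
  also have "\<dots> = card ({1..<p} - {i})" by (rule card_image_is_perm[OF perm]) (use p in auto)
  finally show ?thesis using i by auto
qed

lemma image_left_of_max: "s ` {1..<p} = {1..<p}"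
proof -
  have "s ` {1..<p} \<subseteq> {1..<p}"
    using left_of_max_below is_perm_mem[OF perm] p by fastforce
  moreover have "card (s ` {1..<p}) = card {1..<p}"
    by (rule card_image_is_perm[OF perm]) (use p in auto)
  ultimately show ?thesis by (simp add: card_subset_eq)
qed

lemma straddles_left_of_max: "straddles (Suc n) s (p - 1) = 0"
proof -
  have "{i \<in> descents (Suc n) s. s (Suc i) \<le> p - 1 \<and> p - 1 < s i} = {}"
  proof (rule ccontr)
    assume "{i \<in> descents (Suc n) s. s (Suc i) \<le> p - 1 \<and> p - 1 < s i} \<noteq> {}"
    then obtain i where i: "i \<in> descents (Suc n) s" "s (Suc i) \<le> p - 1" "p - 1 < s i" by blast
    have ir: "i \<in> {1..Suc n}" "Suc i \<in> {1..Suc n}" using descents_memD[OF i(1)] by auto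
    show False
    proof (cases "i < p")
      case True then show ?thesis using left_of_max_below[of i] ir i by auto
    next
      case False
      have "s (Suc i) \<in> {1..<p}" using is_perm_mem[OF perm ir(2)] i p by auto
      then obtain k where "k \<in> {1..<p}" "s k = s (Suc i)" using image_left_of_max by (metis imageE)
      then show False using is_perm_eq_iff[OF perm _ ir(2), of k] False p by auto
    qed
  qed
  then show ?thesis unfolding straddles_def by simp
qed

lemma straddles_right_of_max:
  assumes x: "p \<le> x" "x \<le> n"
  shows "0 < straddles (Suc n) s x"
proof -
  have "\<not> {1..x} \<subseteq> s ` {1..<p}"
  proof
    assume "{1..x} \<subseteq> s ` {1..<p}"
    then have "card {1..x} \<le> card (s ` {1..<p})" by (intro card_mono) auto
    also have "\<dots> = p - 1" using image_left_of_max by simp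
    finally show False using x p by simp
  qed
  then obtain v where v: "v \<in> {1..x}" "v \<notin> s ` {1..<p}" by blast
  then obtain k where k: "k \<in> {1..Suc n}" "s k = v" using is_perm_preimage[OF perm, of v] x by auto
  have "k \<noteq> p" using k v max x by auto
  moreover have "\<not> k < p" using k v by auto
  ultimately have "p < k" by simp
  then show ?thesis using straddles_pos[of p k "Suc n" x s] p k v max x by auto
qed

end

lemma delete_at_max:
  assumes perm: "is_perm (Suc n) s" and av: "avoids231 (Suc n) s"
    and max: "s p = Suc n" and p: "p \<in> {1..Suc n}"
  shows "is_perm n (delete_at p s)" "avoids231 n (delete_at p s)"
    "desc_tops (Suc n) s = desc_tops n (delete_at p s) \<union> (if p \<le> n then {Suc n} else {})"
    "desc_bots (Suc n) s = desc_bots n (delete_at p s) \<union> (if p \<le> n then {s (Suc p)} else {})"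
proof -
  let ?s = "delete_at p s"
  show perm': "is_perm n ?s" by (rule is_perm_delete_at[OF perm p max])
  show "avoids231 n ?s" by (rule avoids231_delete_at[OF av])
  have bound: "\<And>i. i \<in> {1..n} \<Longrightarrow> ?s i < Suc n" using is_perm_mem[OF perm'] by fastforce
  have asc: "?s (p - 1) < ?s p" if "2 \<le> p" "p \<le> n"
    using left_of_max_less_right[OF perm av max, of "p - 1" "Suc p"] that
    unfolding delete_at_def by auto
  have p1: "1 \<le> p" "p \<le> Suc n" using p by auto
  note insert = desc_tops_bots_insert_at[OF p1 bound asc, unfolded insert_at_delete_at[of s p, OF max]]
  show "desc_tops (Suc n) s = desc_tops n ?s \<union> (if p \<le> n then {Suc n} else {})"
    using insert(1) .
  show "desc_bots (Suc n) s = desc_bots n ?s \<union> (if p \<le> n then {s (Suc p)} else {})"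
    using insert(2) unfolding delete_at_def by simp
qed

text \<open>The bottom \<open>f\<close> that is paired with the top \<open>N\<close> when \<open>N\<close> is not the last letter:
  it is the unique bottom satisfying these counting conditions, so it is determined by the
  pair of sets \<open>(T, B)\<close> alone.\<close>

definition max_partner :: "nat \<Rightarrow> nat set \<Rightarrow> nat set \<Rightarrow> nat \<Rightarrow> bool" where
  "max_partner N T B f \<longleftrightarrow> f \<in> B \<and> f < N \<and> count_le B f = count_le T f + 1 \<and>
     (\<forall>x. f \<le> x \<and> Suc x < N \<longrightarrow> count_le T (Suc x) + 1 \<le> count_le B x)"

lemma max_partner_unique:
  assumes fin: "finite T" "finite B" and f: "max_partner N T B f" and g: "max_partner N T B g"
  shows "f = g"
proof (rule ccontr)
  have no_less: False if f: "max_partner N T B f" and g: "max_partner N T B g" and "f < g" for f g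
  proof -
    have "Suc (g - 1) = g" using \<open>f < g\<close> by simp
    moreover have "f \<le> g - 1" "Suc (g - 1) < N"
      using g \<open>f < g\<close> unfolding max_partner_def by auto
    then have "count_le T (Suc (g - 1)) + 1 \<le> count_le B (g - 1)"
      using f unfolding max_partner_def by blast
    ultimately show False
      using g count_le_Suc[OF fin(1), of "g - 1"] count_le_Suc[OF fin(2), of "g - 1"]
      unfolding max_partner_def by (auto split: if_splits)
  qed
  assume "f \<noteq> g"
  then show False using no_less[OF f g] no_less[OF g f] by linarith
qed

lemma straddles_partner:
  assumes perm: "is_perm (Suc n) s" and av: "avoids231 (Suc n) s"
    and max: "s p = Suc n" and p: "1 \<le> p" "p \<le> n"
  shows "straddles (Suc n) s (s (Suc p)) = 1"
proof -
  let ?f = "s (Suc p)"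
  have sp: "Suc p \<in> {1..Suc n}" "p \<in> {1..Suc n}" using p by auto
  have "{i \<in> descents (Suc n) s. s (Suc i) \<le> ?f \<and> ?f < s i} = {p}"
  proof (intro equalityI subsetI)
    fix i assume i: "i \<in> {i \<in> descents (Suc n) s. s (Suc i) \<le> ?f \<and> ?f < s i}"
    have ir: "1 \<le> i" "i < Suc n" using i unfolding descents_def by auto
    show "i \<in> {p}"
    proof (rule ccontr)
      assume "i \<notin> {p}"
      then have "s (Suc i) \<noteq> ?f" using is_perm_eq_iff[OF perm _ sp(1), of "Suc i"] ir by auto
      then have lt: "s (Suc i) < ?f" "?f < s i" using i by auto
      have "i \<noteq> p" using \<open>i \<notin> {p}\<close> by simp
      then consider "i < p" | "i = Suc p" | "Suc p < i" by linarith
      then show False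
      proof cases
        case 1
        then show ?thesis using left_of_max_less_right[OF perm av max p, of i "Suc p"] ir p lt by auto
      next
        case 3
        then show ?thesis using avoids231D[OF av, of "Suc p" i "Suc i"] ir lt by auto
      qed (use lt in simp)
    qed
  next
    fix i assume "i \<in> {p}"
    moreover have "?f < Suc n"
      using is_perm_mem[OF perm sp(1)] is_perm_eq_iff[OF perm sp] max by auto
    ultimately show "i \<in> {i \<in> descents (Suc n) s. s (Suc i) \<le> ?f \<and> ?f < s i}"
      using p max unfolding descents_def by auto
  qed
  then show ?thesis unfolding straddles_def by simp
qed

lemma max_partner_delete_at:
  assumes perm: "is_perm (Suc n) s" and av: "avoids231 (Suc n) s"
    and max: "s p = Suc n" and p: "1 \<le> p" "p \<le> n"
  shows "max_partner (Suc n) (desc_tops (Suc n) s) (desc_bots (Suc n) s) (s (Suc p))"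
    "desc_tops n (delete_at p s) = desc_tops (Suc n) s - {Suc n}"
    "desc_bots n (delete_at p s) = desc_bots (Suc n) s - {s (Suc p)}"
proof -
  let ?s = "delete_at p s" and ?T = "desc_tops (Suc n) s" and ?B = "desc_bots (Suc n) s"
    and ?f = "s (Suc p)"
  have pr: "p \<in> {1..Suc n}" using p by auto
  note del = delete_at_max[OF perm av max pr]
  have fp: "?s p = ?f" unfolding delete_at_def by simp
  have f: "?f \<in> {1..n}" using is_perm_mem[OF del(1), of p] fp p by auto
  have "Suc n \<notin> desc_tops n ?s" using desc_tops_subset[OF del(1)] by auto
  then show T': "desc_tops n ?s = ?T - {Suc n}" using del(3) p by auto
  have "?f \<notin> desc_bots n ?s"
  proof
    assume "?f \<in> desc_bots n ?s"
    then have "2 \<le> p" "?s p < ?s (p - 1)"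
      using desc_bots_iff[OF del(1), of p] fp p by auto
    moreover have "s (p - 1) < s (Suc p)"
      by (rule left_of_max_less_right[OF perm av max p]) (use \<open>2 \<le> p\<close> p in auto)
    ultimately show False unfolding delete_at_def by simp
  qed
  then show B': "desc_bots n ?s = ?B - {?f}" using del(4) p by auto
  have fB: "?f \<in> ?B" using del(4) p by simp
  have "count_le ?B ?f = count_le ?T ?f + 1"
    using count_le_desc_bots[OF perm, of ?f] straddles_partner[OF perm av max p] by simp
  moreover have "count_le ?T (Suc x) + 1 \<le> count_le ?B x" if x: "?f \<le> x" "Suc x < Suc n" for x
  proof -
    have "count_le (desc_tops n ?s) (Suc x) \<le> count_le (desc_bots n ?s) x"
      by (rule ballot_count_le[OF ballot_desc_tops_bots[OF del(1)]])
    moreover have "count_le (desc_tops n ?s) (Suc x) = count_le ?T (Suc x)"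
      unfolding T' using x by (simp add: count_le_remove_gt)
    moreover have "count_le (desc_bots n ?s) x = count_le ?B x - 1"
      unfolding B' using count_le_remove[of ?B ?f x] fB x by simp
    moreover have "1 \<le> count_le ?B x" by (rule count_le_pos[OF _ fB x(1)]) simp
    ultimately show ?thesis by linarith
  qed
  ultimately show "max_partner (Suc n) ?T ?B ?f"
    unfolding max_partner_def using fB f by auto
qed

text \<open>The position \<open>p\<close> of the largest letter is determined by the straddle counts, which
  depend only on the descent tops and bottoms: no descent straddles \<open>p - 1\<close>, but some descent
  straddles each of \<open>p, \<dots>, n\<close>.\<close>

lemma max_position_eq:
  assumes s1: "is_perm (Suc n) s1" "avoids231 (Suc n) s1" "s1 p1 = Suc n" "p1 \<in> {1..Suc n}"
    and s2: "is_perm (Suc n) s2" "avoids231 (Suc n) s2" "s2 p2 = Suc n" "p2 \<in> {1..Suc n}"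
    and tops: "desc_tops (Suc n) s1 = desc_tops (Suc n) s2"
    and bots: "desc_bots (Suc n) s1 = desc_bots (Suc n) s2"
  shows "p1 = p2"
proof -
  have last: "p \<le> n \<longleftrightarrow> Suc n \<in> desc_tops (Suc n) s"
    if "is_perm (Suc n) s" "avoids231 (Suc n) s" "s p = Suc n" "p \<in> {1..Suc n}" for s p
    using delete_at_max(3)[OF that] desc_tops_subset[OF delete_at_max(1)[OF that]] by auto
  have straddles: "straddles (Suc n) s1 x = straddles (Suc n) s2 x" for x
    using count_le_desc_bots[OF s1(1), of x] count_le_desc_bots[OF s2(1), of x] tops bots by simp
  have not_less: "\<not> p < q"
    if "is_perm (Suc n) s" "avoids231 (Suc n) s" "s p = Suc n" "p \<in> {1..Suc n}" "p \<le> n"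
      and "is_perm (Suc n) s'" "avoids231 (Suc n) s'" "s' q = Suc n" "q \<in> {1..Suc n}" "q \<le> n"
      and "\<And>x. straddles (Suc n) s x = straddles (Suc n) s' x"
    for s s' p q
  proof
    assume "p < q"
    have "1 \<le> p" "1 \<le> q" using that(4,9) by auto
    then have "0 < straddles (Suc n) s (q - 1)"
      using straddles_right_of_max[OF that(1-3) _ that(5)] \<open>p < q\<close> that(10) by auto
    moreover have "straddles (Suc n) s' (q - 1) = 0"
      by (rule straddles_left_of_max[OF that(6-8) \<open>1 \<le> q\<close> that(10)])
    ultimately show False using that(11) by simp
  qed
  show ?thesis
  proof (cases "p1 \<le> n")
    case True
    then have "p2 \<le> n" using last[OF s1] last[OF s2] tops by simp
    have "\<not> p1 < p2" by (rule not_less[OF s1 True s2 \<open>p2 \<le> n\<close> straddles])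
    moreover have "\<not> p2 < p1" by (rule not_less[OF s2 \<open>p2 \<le> n\<close> s1 True straddles[symmetric]])
    ultimately show ?thesis by simp
  next
    case False
    then have "\<not> p2 \<le> n" using last[OF s1] last[OF s2] tops by simp
    then show ?thesis using False s1(4) s2(4) by simp
  qed
qed

lemma avoids231_eq_if_desc_tops_bots_eq:
  "is_perm N s1 \<Longrightarrow> avoids231 N s1 \<Longrightarrow> is_perm N s2 \<Longrightarrow> avoids231 N s2 \<Longrightarrow>
    desc_tops N s1 = desc_tops N s2 \<Longrightarrow> desc_bots N s1 = desc_bots N s2 \<Longrightarrow>
    i \<in> {1..N} \<Longrightarrow> s1 i = s2 i"
proof (induction N arbitrary: s1 s2 i)
  case 0
  then show ?case by simp
next
  case (Suc n)
  obtain p where p: "p \<in> {1..Suc n}" "s1 p = Suc n"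
    using is_perm_preimage[OF Suc.prems(1), of "Suc n"] by auto
  obtain p2 where p2: "p2 \<in> {1..Suc n}" "s2 p2 = Suc n"
    using is_perm_preimage[OF Suc.prems(3), of "Suc n"] by auto
  have "p2 = p"
    using max_position_eq[OF Suc.prems(3,4) p2(2,1) Suc.prems(1,2) p(2,1)] Suc.prems(5,6) by simp
  with p2 have max2: "s2 p = Suc n" by simp
  note d1 = delete_at_max[OF Suc.prems(1,2) p(2,1)] and d2 = delete_at_max[OF Suc.prems(3,4) max2 p(1)]
  have "desc_tops n (delete_at p s1) = desc_tops n (delete_at p s2) \<and>
      desc_bots n (delete_at p s1) = desc_bots n (delete_at p s2)"
  proof (cases "p \<le> n")
    case True
    have "1 \<le> p" using p by simp
    note m1 = max_partner_delete_at[OF Suc.prems(1,2) p(2) this True]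
      and m2 = max_partner_delete_at[OF Suc.prems(3,4) max2 \<open>1 \<le> p\<close> True]
    have "s1 (Suc p) = s2 (Suc p)"
      using max_partner_unique[OF _ _ m1(1)] m2(1) Suc.prems(5,6) by simp
    then show ?thesis using m1(2,3) m2(2,3) Suc.prems(5,6) by simp
  next
    case False
    then show ?thesis using d1(3,4) d2(3,4) Suc.prems(5,6) by simp
  qed
  then have "delete_at p s1 j = delete_at p s2 j" if "j \<in> {1..n}" for j
    using Suc.IH[OF d1(1,2) d2(1,2)] that by blast
  then have "insert_at p (Suc n) (delete_at p s1) i = insert_at p (Suc n) (delete_at p s2) i"
    using insert_at_cong p(1) Suc.prems(7) by blast
  then show ?case using insert_at_delete_at[of s1, OF p(2)] insert_at_delete_at[of s2, OF max2] by simp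
qed

section \<open>Every ballot pair is realised by a 231-avoiding permutation\<close>

lemma straddles_zero_Suc:
  assumes perm: "is_perm n s" and av: "avoids231 n s" and j: "j < n" and z: "straddles n s j = 0"
  shows "j < s (Suc j)" "straddles n s (s (Suc j)) = 0"
    "\<And>x. j < x \<Longrightarrow> x < s (Suc j) \<Longrightarrow> 0 < straddles n s x"
proof -
  let ?g = "s (Suc j)"
  have lo: "i \<in> {1..j} \<Longrightarrow> s i \<le> j" for i
    using straddles_zero_prefix[OF perm _ z] j by auto
  have hi: "k \<in> {1..n} \<Longrightarrow> s k \<le> j \<Longrightarrow> k \<le> j" for k
    using straddles_zero_le[OF perm _ z] j by simp
  have sj: "Suc j \<in> {1..n}" using j by auto
  show gj: "j < ?g"
  proof (rule ccontr)
    assume "\<not> j < ?g"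
    then show False using hi[OF sj] by simp
  qed
  have "{i \<in> descents n s. s (Suc i) \<le> ?g \<and> ?g < s i} = {}"
  proof (rule ccontr)
    assume "{i \<in> descents n s. s (Suc i) \<le> ?g \<and> ?g < s i} \<noteq> {}"
    then obtain i where i: "i \<in> descents n s" "s (Suc i) \<le> ?g" "?g < s i" by blast
    have ir: "1 \<le> i" "i < n" using i unfolding descents_def by auto
    have "\<not> i \<le> j" using lo[of i] ir i gj by auto
    moreover have "i \<noteq> Suc j" using i by auto
    ultimately have ij: "Suc j < i" by simp
    have "s (Suc i) \<noteq> ?g" using is_perm_eq_iff[OF perm _ sj, of "Suc i"] ir ij by auto
    then show False using avoids231D[OF av, of "Suc j" i "Suc i"] ij ir i by auto
  qed
  then show "straddles n s ?g = 0" unfolding straddles_def by simp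
  show "0 < straddles n s x" if x: "j < x" "x < ?g" for x
  proof -
    have "x \<in> {1..n}" using x is_perm_mem[OF perm sj] by auto
    then obtain k where k: "k \<in> {1..n}" "s k = x" using is_perm_preimage[OF perm] by blast
    have "\<not> k \<le> j" using lo[of k] k x by auto
    moreover have "k \<noteq> Suc j" using k x by auto
    ultimately have "Suc j < k" by simp
    then show ?thesis using straddles_pos[of "Suc j" k n x s] k x by auto
  qed
qed

context
  fixes n T B
  assumes bal: "ballot (Suc n) T B" and top: "Suc n \<in> T"
begin

lemma ballot_last_balanced:
  obtains j where "j < n" "count_le B j = count_le T j"
    "\<And>x. j < x \<Longrightarrow> x \<le> n \<Longrightarrow> count_le T x < count_le B x"
proof -
  let ?J = "{x. x \<le> n \<and> count_le B x = count_le T x}"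
  have fin: "finite T" "finite B" using ballot_finite[OF bal] .
  have T: "T \<subseteq> {1..Suc n}" and card: "card T = card B"
    using ballot_subsets[OF bal] by auto
  have B: "B \<subseteq> {1..n}" by (rule ballot_Suc_bots_subset[OF bal])
  have cn: "count_le B n = count_le T n + 1"
  proof -
    have "{b\<in>B. b \<le> n} = B" "{t\<in>T. t \<le> n} = T - {Suc n}"
      using B T by (auto simp: le_Suc_eq)
    moreover have "card (T - {Suc n}) + 1 = card T"
      using top fin(1) card_gt_0_iff[of T] by auto
    ultimately show ?thesis
      unfolding count_le_def using card by simp
  qed
  have "0 \<notin> T" "0 \<notin> B" using T B by auto
  then have "0 \<in> ?J" using count_le_0[of T] count_le_0[of B] by simp
  moreover have "finite ?J" by (rule finite_subset[of _ "{..n}"]) auto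
  ultimately have J: "Max ?J \<in> ?J" "\<And>x. x \<in> ?J \<Longrightarrow> x \<le> Max ?J"
    using Max_in Max_ge by blast+
  have "Max ?J \<noteq> n" using J(1) cn by auto
  show ?thesis
  proof (rule that)
    show "Max ?J < n" "count_le B (Max ?J) = count_le T (Max ?J)"
      using J(1) \<open>Max ?J \<noteq> n\<close> by auto
    fix x assume x: "Max ?J < x" "x \<le> n"
    then have "x \<notin> ?J" using J(2)[of x] by linarith
    then show "count_le T x < count_le B x"
      using ballot_count_le_le[OF bal, of x] x(2) by auto
  qed
qed

lemma ballot_max_partner:
  assumes j: "j < n" "count_le B j = count_le T j"
    and pos: "\<And>x. j < x \<Longrightarrow> x \<le> n \<Longrightarrow> count_le T x < count_le B x"
  obtains f where "j < f" "f \<le> n" "max_partner (Suc n) T B f"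
proof -
  let ?F = "{x. j < x \<and> x \<le> n \<and> x \<in> B \<and> count_le B x = count_le T x + 1}"
  have fin: "finite T" "finite B" using ballot_finite[OF bal] .
  have step: "count_le B (Suc x) = count_le B x + (if Suc x \<in> B then 1 else 0)"
    "count_le T (Suc x) = count_le T x + (if Suc x \<in> T then 1 else 0)" for x
    using count_le_Suc fin by auto
  have "Suc j \<in> ?F"
    using pos[of "Suc j"] j step[of j] by (auto split: if_splits)
  moreover have "finite ?F" by (rule finite_subset[of _ "{..n}"]) auto
  ultimately have f: "Max ?F \<in> ?F" and f_max: "\<And>x. x \<in> ?F \<Longrightarrow> x \<le> Max ?F"
    using Max_in Max_ge by blast+
  define f where "f = Max ?F"
  have "count_le T (Suc x) + 1 \<le> count_le B x" if x: "f \<le> x" "x < n" for x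
  proof (rule ccontr)
    assume "\<not> ?thesis"
    moreover have "count_le T (Suc x) \<le> count_le B x" by (rule ballot_count_le[OF bal])
    moreover have "count_le T (Suc x) < count_le B (Suc x)" using pos[of "Suc x"] x f f_def by auto
    ultimately have "Suc x \<in> ?F" using x f f_def step[of x] by (auto split: if_splits)
    then have "Suc x \<le> f" unfolding f_def by (rule f_max)
    then show False using x by simp
  qed
  then have "max_partner (Suc n) T B f"
    using f unfolding max_partner_def f_def by auto
  then show ?thesis using that f unfolding f_def by auto
qed

lemma ballot_remove_max_partner:
  assumes f: "max_partner (Suc n) T B f"
  shows "ballot n (T - {Suc n}) (B - {f})"
  unfolding ballot_iff_count_le
proof (intro conjI allI)
  have fin: "finite T" "finite B" using ballot_finite[OF bal] .
  have T: "T \<subseteq> {1..Suc n}" and card: "card T = card B"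
    using ballot_subsets[OF bal] by auto
  have B: "B \<subseteq> {1..n}" by (rule ballot_Suc_bots_subset[OF bal])
  have fB: "f \<in> B" using f unfolding max_partner_def by simp
  show "T - {Suc n} \<subseteq> {1..n}" using T by (auto simp: le_Suc_eq)
  show "B - {f} \<subseteq> {1..n}" using B by auto
  show "card (T - {Suc n}) = card (B - {f})" using card top fB fin by simp
  fix x
  show "count_le (T - {Suc n}) (Suc x) \<le> count_le (B - {f}) x"
  proof (cases "x < n")
    case False
    then have "count_le (T - {Suc n}) (Suc x) = card (T - {Suc n})" "count_le (B - {f}) x = card (B - {f})"
      using T B unfolding count_le_def by (auto intro!: arg_cong[where f = card])
    then show ?thesis using card top fB fin by simp
  next
    case True
    then have "count_le (T - {Suc n}) (Suc x) = count_le T (Suc x)" by (simp add: count_le_remove_gt)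
    moreover have "count_le T (Suc x) + 1 \<le> count_le B x" if "f \<le> x"
      using f that True unfolding max_partner_def by auto
    moreover have "count_le T (Suc x) \<le> count_le B x" by (rule ballot_count_le[OF bal])
    ultimately show ?thesis
      using count_le_remove[OF fin(2), of f x] fB by (cases "f \<le> x") auto
  qed
qed

end

lemma straddles_top:
  assumes "is_perm n s"
  shows "straddles n s n = 0"
proof -
  have "s i \<le> n" if "i \<in> descents n s" for i
    using is_perm_mem[OF assms, of i] descents_memD[OF that] by simp
  then have "{i\<in>descents n s. s (Suc i) \<le> n \<and> n < s i} = {}" by (auto simp: not_less)
  then show ?thesis unfolding straddles_def by simp
qed

lemma insert_max_at_unstraddled:
  assumes perm: "is_perm n s" and av: "avoids231 n s" and j: "j \<le> n" and z: "straddles n s j = 0"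
  shows "is_perm (Suc n) (insert_at (Suc j) (Suc n) s)"
    "avoids231 (Suc n) (insert_at (Suc j) (Suc n) s)"
    "desc_tops (Suc n) (insert_at (Suc j) (Suc n) s) = desc_tops n s \<union> (if j < n then {Suc n} else {})"
    "desc_bots (Suc n) (insert_at (Suc j) (Suc n) s) = desc_bots n s \<union> (if j < n then {s (Suc j)} else {})"
proof -
  have p: "1 \<le> Suc j" "Suc j \<le> Suc n" using j by auto
  have bound: "\<And>i. i \<in> {1..n} \<Longrightarrow> s i < Suc n" using is_perm_mem[OF perm] by fastforce
  have sep: "s i < s k" if "1 \<le> i" "i < Suc j" "Suc j \<le> k" "k \<le> n" for i k
  proof -
    have "s i \<le> j" using straddles_zero_prefix[OF perm j z] that by auto
    moreover have "\<not> s k \<le> j" using straddles_zero_le[OF perm j z, of k] that by auto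
    ultimately show ?thesis by simp
  qed
  show "is_perm (Suc n) (insert_at (Suc j) (Suc n) s)"
    by (rule is_perm_insert_at[OF perm]) (use p in simp)
  show "avoids231 (Suc n) (insert_at (Suc j) (Suc n) s)"
    by (rule avoids231_insert_at[OF av p sep bound]) auto
  have asc: "s (Suc j - 1) < s (Suc j)" if "2 \<le> Suc j" "Suc j \<le> n"
    using sep[of j "Suc j"] that by auto
  show "desc_tops (Suc n) (insert_at (Suc j) (Suc n) s) = desc_tops n s \<union> (if j < n then {Suc n} else {})"
    "desc_bots (Suc n) (insert_at (Suc j) (Suc n) s) = desc_bots n s \<union> (if j < n then {s (Suc j)} else {})"
    using desc_tops_bots_insert_at[OF p bound asc] by simp_all
qed

text \<open>Let \<open>j\<close> be the last balanced value below \<open>n\<close> and \<open>f\<close> the partner bottom of \<open>Suc n\<close>.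
  A realiser of \<open>(T - {Suc n}, B - {f})\<close> has no descent straddling \<open>j\<close> and carries \<open>f\<close> at
  position \<open>Suc j\<close>, so inserting \<open>Suc n\<close> at that position realises \<open>(T, B)\<close>.\<close>

context
  fixes n T B j f s
  assumes bal: "ballot (Suc n) T B"
    and j: "j < n" "count_le B j = count_le T j" "\<And>x. j < x \<Longrightarrow> x \<le> n \<Longrightarrow> count_le T x < count_le B x"
    and f: "j < f" "f \<le> n" "max_partner (Suc n) T B f"
    and s: "is_perm n s" "avoids231 n s" "desc_tops n s = T - {Suc n}" "desc_bots n s = B - {f}"
begin

lemma straddles_realiser:
  assumes x: "x \<le> n"
  shows "straddles n s x = count_le B x - (if f \<le> x then 1 else 0) - count_le T x"
proof -
  have "f \<in> B" using f(3) unfolding max_partner_def by simp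
  then have "count_le (B - {f}) x = count_le B x - (if f \<le> x then 1 else 0)"
    using count_le_remove[OF ballot_finite(2)[OF bal], of f x] by simp
  moreover have "count_le (T - {Suc n}) x = count_le T x"
    by (rule count_le_remove_gt) (use x in simp)
  moreover have "count_le (B - {f}) x = count_le (T - {Suc n}) x + straddles n s x"
    using count_le_desc_bots[OF s(1), of x] s(3,4) by simp
  ultimately show ?thesis by simp
qed

lemma realiser_unstraddled: "straddles n s j = 0"
  using straddles_realiser[of j] j f by simp

lemma realiser_next_letter: "s (Suc j) = f"
proof -
  note succ = straddles_zero_Suc[OF s(1,2) j(1) realiser_unstraddled]
  have at_f: "straddles n s f = 0"
    using straddles_realiser[of f] f unfolding max_partner_def by simp
  have below_f: "0 < straddles n s x" if "j < x" "x < f" for x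
    using straddles_realiser[of x] j(3)[of x] that f by simp
  show ?thesis
  proof (cases "s (Suc j)" f rule: linorder_cases)
    case less
    then show ?thesis using below_f[of "s (Suc j)"] succ(1,2) by simp
  next
    case greater
    then show ?thesis using succ(3)[of f] f(1) at_f by simp
  qed
qed

end

lemma ballot_realised_by_avoids231:
  "ballot N T B \<Longrightarrow> \<exists>s. is_perm N s \<and> avoids231 N s \<and> desc_tops N s = T \<and> desc_bots N s = B"
proof (induction N arbitrary: T B)
  case 0
  then have "T = {}" "B = {}" unfolding ballot_def by auto
  moreover have "is_perm 0 id" "avoids231 0 id" "desc_tops 0 id = {}" "desc_bots 0 id = {}"
    unfolding avoids231_def desc_tops_def desc_bots_def by auto
  ultimately show ?case by metis
next
  case (Suc n)
  show ?case
  proof (cases "Suc n \<in> T")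
    case False
    have "{1..Suc n} - {Suc n} = {1..n}" by auto
    then have "ballot n T B"
      using Suc.prems False ballot_Suc_bots_subset[OF Suc.prems] unfolding ballot_def by blast
    then obtain s where s: "is_perm n s" "avoids231 n s" "desc_tops n s = T" "desc_bots n s = B"
      using Suc.IH by blast
    note ins = insert_max_at_unstraddled[OF s(1,2) order.refl straddles_top[OF s(1)]]
    show ?thesis using ins s by (intro exI[of _ "insert_at (Suc n) (Suc n) s"]) simp
  next
    case True
    obtain j where j: "j < n" "count_le B j = count_le T j"
      "\<And>x. j < x \<Longrightarrow> x \<le> n \<Longrightarrow> count_le T x < count_le B x"
      using ballot_last_balanced[OF Suc.prems True] by blast
    obtain f where f: "j < f" "f \<le> n" "max_partner (Suc n) T B f"
      using ballot_max_partner[OF Suc.prems True j] by blast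
    obtain s where s: "is_perm n s" "avoids231 n s" "desc_tops n s = T - {Suc n}" "desc_bots n s = B - {f}"
      using Suc.IH[OF ballot_remove_max_partner[OF Suc.prems True f(3)]] by blast
    note ins = insert_max_at_unstraddled[OF s(1,2) less_imp_le[OF j(1)]
        realiser_unstraddled[OF Suc.prems j f s]]
    have "f \<in> B" using f(3) unfolding max_partner_def by simp
    then show ?thesis
      using ins j(1) s True realiser_next_letter[OF Suc.prems j f s]
      by (intro exI[of _ "insert_at (Suc j) (Suc n) s"]) auto
  qed
qed

section \<open>Linear statistics in terms of descent tops and bottoms\<close>

context
  fixes n s
  assumes perm: "is_perm n s"
begin

lemma ext_prev_iff:
  assumes i: "i \<in> {1..n}"
  shows "ext n s (i - 1) < ext n s i \<longleftrightarrow> s i \<notin> desc_bots n s"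
    and "ext n s (i - 1) > ext n s i \<longleftrightarrow> s i \<in> desc_bots n s"
proof -
  have "s (i - 1) \<noteq> s i" if "2 \<le> i"
  proof -
    have "i - 1 \<in> {1..n}" using that i by auto
    then show ?thesis using is_perm_eq_iff[OF perm _ i, of "i - 1"] that by auto
  qed
  moreover have "ext n s (i - 1) = (if i = 1 then 0 else s (i - 1))" "ext n s i = s i"
    using i unfolding ext_def by auto
  moreover have "1 \<le> s i" using is_perm_mem[OF perm i] by simp
  ultimately show "ext n s (i - 1) < ext n s i \<longleftrightarrow> s i \<notin> desc_bots n s"
    and "ext n s (i - 1) > ext n s i \<longleftrightarrow> s i \<in> desc_bots n s"
    unfolding desc_bots_iff[OF perm i] using i by (cases "i = 1"; force)+
qed

lemma ext_next_iff:
  assumes i: "i \<in> {1..n}"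
  shows "ext n s i < ext n s (i + 1) \<longleftrightarrow> s i \<notin> desc_tops n s"
    and "ext n s i > ext n s (i + 1) \<longleftrightarrow> s i \<in> desc_tops n s"
proof -
  have "s (Suc i) \<noteq> s i" if "i < n"
    using is_perm_eq_iff[OF perm _ i, of "Suc i"] that i by auto
  moreover have "ext n s (i + 1) = (if i = n then n + 1 else s (Suc i))" "ext n s i = s i"
    using i unfolding ext_def by auto
  moreover have "s i \<le> n" using is_perm_mem[OF perm i] by simp
  ultimately show "ext n s i < ext n s (i + 1) \<longleftrightarrow> s i \<notin> desc_tops n s"
    and "ext n s i > ext n s (i + 1) \<longleftrightarrow> s i \<in> desc_tops n s"
    unfolding desc_tops_iff[OF perm i] descents_def using i by (cases "i = n"; force)+
qed

lemmas ext_neighbour_iffs = ext_prev_iff ext_next_iff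

lemma lpk_eq: "lpk n s = card {x\<in>{1..n}. x \<notin> desc_bots n s \<and> x \<in> desc_tops n s}"
proof -
  have "{i\<in>{1..n}. ext n s (i - 1) < ext n s i \<and> ext n s i > ext n s (i + 1)}
      = {i\<in>{1..n}. s i \<notin> desc_bots n s \<and> s i \<in> desc_tops n s}"
    using ext_neighbour_iffs by blast
  then show ?thesis
    unfolding lpk_def using card_filter_is_perm[OF perm, of "\<lambda>x. x \<notin> desc_bots n s \<and> x \<in> desc_tops n s"] by simp
qed

lemma lval_eq: "lval n s = card {x\<in>{1..n}. x \<in> desc_bots n s \<and> x \<notin> desc_tops n s}"
proof -
  have "{i\<in>{1..n}. ext n s (i - 1) > ext n s i \<and> ext n s i < ext n s (i + 1)}
      = {i\<in>{1..n}. s i \<in> desc_bots n s \<and> s i \<notin> desc_tops n s}"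
    using ext_neighbour_iffs by blast
  then show ?thesis
    unfolding lval_def using card_filter_is_perm[OF perm, of "\<lambda>x. x \<in> desc_bots n s \<and> x \<notin> desc_tops n s"] by simp
qed

lemma lda_eq: "lda n s = card {x\<in>{1..n}. x \<notin> desc_bots n s \<and> x \<notin> desc_tops n s}"
proof -
  have "{i\<in>{1..n}. ext n s (i - 1) < ext n s i \<and> ext n s i < ext n s (i + 1)}
      = {i\<in>{1..n}. s i \<notin> desc_bots n s \<and> s i \<notin> desc_tops n s}"
    using ext_neighbour_iffs by blast
  then show ?thesis
    unfolding lda_def using card_filter_is_perm[OF perm, of "\<lambda>x. x \<notin> desc_bots n s \<and> x \<notin> desc_tops n s"] by simp
qed

lemma ldd_eq: "ldd n s = card {x\<in>{1..n}. x \<in> desc_bots n s \<and> x \<in> desc_tops n s}"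
proof -
  have "{i\<in>{1..n}. ext n s (i - 1) > ext n s i \<and> ext n s i > ext n s (i + 1)}
      = {i\<in>{1..n}. s i \<in> desc_bots n s \<and> s i \<in> desc_tops n s}"
    using ext_neighbour_iffs by blast
  then show ?thesis
    unfolding ldd_def using card_filter_is_perm[OF perm, of "\<lambda>x. x \<in> desc_bots n s \<and> x \<in> desc_tops n s"] by simp
qed

lemma asc_inf_eq: "asc_inf n s = card {x\<in>{1..n}. x \<notin> desc_tops n s}"
proof -
  have "{i\<in>{1..n}. ext n s i < ext n s (i + 1)} = {i\<in>{1..n}. s i \<notin> desc_tops n s}"
    using ext_neighbour_iffs by blast
  then show ?thesis
    unfolding asc_inf_def using card_filter_is_perm[OF perm, of "\<lambda>x. x \<notin> desc_tops n s"] by simp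
qed

lemma des_eq: "des n s = card (desc_tops n s)"
proof -
  have "{i. 1 \<le> i \<and> i \<le> n - 1 \<and> s i > s (i + 1)} = descents n s"
    unfolding descents_def by auto
  then show ?thesis unfolding des_def card_desc_tops[OF perm] by simp
qed

end

context
  fixes n s
  assumes perm: "is_perm n s" and av: "avoids231 n s"
begin

text \<open>In a 231-avoiding permutation the letters strictly between the two letters of a descent
  all lie to its right, so each descent contributes exactly that many occurrences of 31-2.\<close>

lemma st312_avoids231:
  "st312 n s + card (desc_tops n s) + \<Sum>(desc_bots n s) = \<Sum>(desc_tops n s)"
proof -
  let ?D = "descents n s"
  let ?C = "\<lambda>i. {j\<in>{1..n}. s (Suc i) < s j \<and> s j < s i}"
  have pairs: "{(i, j). 1 \<le> i \<and> i + 1 < j \<and> j \<le> n \<and> s (i + 1) < s j \<and> s j < s i} = Sigma ?D ?C"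
  proof (intro equalityI subsetI)
    fix x assume "x \<in> Sigma ?D ?C"
    then obtain i j where ij: "x = (i, j)" "i \<in> ?D" "j \<in> {1..n}" "s (Suc i) < s j" "s j < s i"
      by blast
    have ir: "1 \<le> i" "i < n" using ij unfolding descents_def by auto
    have "j \<noteq> i" "j \<noteq> Suc i" using ij by auto
    moreover have "\<not> j < i" using avoids231D[OF av, of j i "Suc i"] ij ir by auto
    ultimately have "Suc i < j" by simp
    then show "x \<in> {(i, j). 1 \<le> i \<and> i + 1 < j \<and> j \<le> n \<and> s (i + 1) < s j \<and> s j < s i}"
      using ij ir by auto
  qed (auto simp: descents_def)
  have card_C: "card (?C i) = s i - Suc (s (Suc i))" if i: "i \<in> ?D" for i
  proof -
    have "card (?C i) = card {x\<in>{1..n}. s (Suc i) < x \<and> x < s i}"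
      by (rule card_filter_is_perm[OF perm])
    also have "{x\<in>{1..n}. s (Suc i) < x \<and> x < s i} = {s (Suc i)<..<s i}"
      using is_perm_mem[OF perm] descents_memD[OF i] by fastforce
    finally show ?thesis by simp
  qed
  have inj: "inj_on s ?D" "inj_on (\<lambda>i. s (Suc i)) ?D"
    using descents_memD is_perm_eq_iff[OF perm] by (auto simp: inj_on_def)
  have "st312 n s = (\<Sum>i\<in>?D. card (?C i))"
    unfolding st312_def pairs by (rule card_SigmaI) auto
  also have "\<dots> = (\<Sum>i\<in>?D. s i - Suc (s (Suc i)))"
    by (rule sum.cong) (use card_C in auto)
  finally have "st312 n s = (\<Sum>i\<in>?D. s i - Suc (s (Suc i)))" .
  moreover have "\<Sum>(desc_tops n s) = (\<Sum>i\<in>?D. s i)" "\<Sum>(desc_bots n s) = (\<Sum>i\<in>?D. s (Suc i))"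
    unfolding desc_tops_eq desc_bots_eq image_comp
    by (simp_all add: sum.reindex[OF inj(1)] sum.reindex[OF inj(2)])
  moreover have "(\<Sum>i\<in>?D. s i - Suc (s (Suc i))) + card ?D + (\<Sum>i\<in>?D. s (Suc i)) = (\<Sum>i\<in>?D. s i)"
    unfolding card_eq_sum sum.distrib[symmetric] by (rule sum.cong) (auto simp: descents_def)
  ultimately show ?thesis using card_desc_tops[OF perm] by simp
qed

lemma left_to_right_max_iff:
  assumes i: "i \<in> {1..n}" and bot: "s i \<notin> desc_bots n s" and top: "s i \<notin> desc_tops n s"
  shows "(\<forall>j. 1 \<le> j \<and> j < i \<longrightarrow> s j < s i) \<longleftrightarrow> straddles n s (s i - 1) = 0"
proof
  assume lr: "\<forall>j. 1 \<le> j \<and> j < i \<longrightarrow> s j < s i"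
  show "straddles n s (s i - 1) = 0"
  proof (rule ccontr)
    assume "straddles n s (s i - 1) \<noteq> 0"
    then obtain k where k: "k \<in> descents n s" "s (Suc k) \<le> s i - 1" "s i - 1 < s k"
      unfolding straddles_def by (metis (no_types, lifting) card.empty empty_Collect_eq)
    have kr: "1 \<le> k" "k < n" using k unfolding descents_def by auto
    have "k \<noteq> i" using k top desc_tops_iff[OF perm i] by auto
    then have "s k \<noteq> s i" using is_perm_eq_iff[OF perm _ i, of k] kr by auto
    then have sk: "s i < s k" "s (Suc k) < s i" using k is_perm_mem[OF perm i] by auto
    show False
    proof (cases "k < i")
      case True then show ?thesis using lr kr sk by auto
    next
      case False
      then show ?thesis using avoids231D[OF av, of i k "Suc k"] i kr sk \<open>k \<noteq> i\<close> by auto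
    qed
  qed
next
  assume z: "straddles n s (s i - 1) = 0"
  show "\<forall>j. 1 \<le> j \<and> j < i \<longrightarrow> s j < s i"
  proof (intro allI impI)
    fix j assume j: "1 \<le> j \<and> j < i"
    show "s j < s i"
    proof (rule ccontr)
      assume "\<not> s j < s i"
      moreover have "s j \<noteq> s i" using is_perm_eq_iff[OF perm _ i, of j] j i by auto
      ultimately have gt: "s i < s j" by simp
      have i2: "2 \<le> i" and im: "i - 1 \<in> {1..n}" using j i by auto
      have "s (i - 1) \<noteq> s i" using is_perm_eq_iff[OF perm im i] i2 by auto
      then have prev: "s (i - 1) < s i" using bot desc_bots_iff[OF perm i] i2 by auto
      then have "j < i - 1" using j gt by (cases "j = i - 1") auto
      then have "0 < straddles n s (s i - 1)"
        using straddles_pos[of j "i - 1" n "s i - 1" s] j im gt prev by auto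
      then show False using z by simp
    qed
  qed
qed

end

section \<open>Cyclic statistics and crossings of a monotone matching\<close>

lemma matches_inv:
  assumes match: "matches n T B t"
  shows "matches n B T (inv t)"
proof -
  have t: "t permutes {1..n}" "T \<subseteq> {1..n}" "B \<subseteq> {1..n}" "t ` T = B"
    "t ` ({1..n} - T) = {1..n} - B" "strict_mono_on T t" "strict_mono_on ({1..n} - T) t"
    using match unfolding matches_def by auto
  have inv_img: "inv t ` (t ` A) = A" for A
    by (simp add: image_comp permutes_inv_o(2)[OF t(1)])
  have mono: "strict_mono_on (t ` A) (inv t)" if "strict_mono_on A t" for A
  proof (rule strict_mono_onI)
    fix a b assume "a \<in> t ` A" "b \<in> t ` A" "a < b"
    then obtain x y where "x \<in> A" "y \<in> A" "a = t x" "b = t y" by blast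
    then show "inv t a < inv t b"
      using strict_mono_on_less[OF that] \<open>a < b\<close> permutes_inverses(2)[OF t(1)] by simp
  qed
  show ?thesis
    unfolding matches_def
    using permutes_inv[OF t(1)] t(2,3) inv_img[of T] inv_img[of "{1..n} - T"] mono[OF t(6)] mono[OF t(7)]
    unfolding t(4,5) by simp
qed

lemma card_filter_inv:
  fixes t :: "nat \<Rightarrow> nat"
  assumes t: "t permutes {1..n}"
  shows "card {x\<in>{1..n}. P x (inv t x)} = card {y\<in>{1..n}. P (t y) y}"
proof -
  have "card {y\<in>{1..n}. P (t y) (inv t (t y))} = card {x\<in>{1..n}. P x (inv t x)}"
    by (rule card_filter_is_perm[OF permutes_is_perm[OF t]])
  then show ?thesis by (simp only: permutes_inverses(2)[OF t])
qed

lemma exc_inv: "t permutes {1..n} \<Longrightarrow> exc n (inv t) = drop_st n t"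
  unfolding exc_def drop_st_def by (rule card_filter_inv[of t n "\<lambda>x y. x < y"])

lemma drop_st_inv: "t permutes {1..n} \<Longrightarrow> drop_st n (inv t) = exc n t"
  unfolding exc_def drop_st_def by (rule card_filter_inv[of t n "\<lambda>x y. y < x"])

lemma fix_st_inv: "t permutes {1..n} \<Longrightarrow> fix_st n (inv t) = fix_st n t"
  unfolding fix_st_def by (metis permutes_inv_eq)

lemma cdd_inv: "t permutes {1..n} \<Longrightarrow> cdd n (inv t) = cda n t"
  unfolding cdd_def cda_def by (simp only: permutes_inv_inv conj_commute)

lemma cda_inv: "t permutes {1..n} \<Longrightarrow> cda n (inv t) = cdd n t"
  unfolding cdd_def cda_def by (simp only: permutes_inv_inv conj_commute)

lemma cval_inv: "t permutes {1..n} \<Longrightarrow> cval n (inv t) = cval n t"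
  unfolding cval_def by (simp only: permutes_inv_inv conj_commute)

lemma cpk_inv: "t permutes {1..n} \<Longrightarrow> cpk n (inv t) = cpk n t"
  unfolding cpk_def by (simp only: permutes_inv_inv conj_commute)

context
  fixes n T B t
  assumes match: "matches n T B t" and bal: "ballot n T B"
begin

lemma matches_inv_greater_iff:
  assumes x: "x \<in> {1..n}"
  shows "x < inv t x \<longleftrightarrow> x \<in> B"
proof -
  have t: "t permutes {1..n}" using match unfolding matches_def by simp
  have y: "inv t x \<in> {1..n}" "t (inv t x) = x"
    using is_perm_mem[OF permutes_is_perm[OF permutes_inv[OF t]] x] permutes_inverses(1)[OF t] by auto
  show ?thesis
    using matches_drop_iff[OF match bal y(1)] matches_mem_iff[OF match y(1)] y(2) by simp
qed

lemma matches_fixed_inv_iff: "x \<in> {1..n} \<Longrightarrow> inv t x = x \<longleftrightarrow> t x = x"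
  using match unfolding matches_def by (metis permutes_inv_eq)

lemma drop_st_matches: "drop_st n t = card T"
proof -
  have "{x\<in>{1..n}. t x < x} = T"
    using matches_drop_iff[OF match bal] match unfolding matches_def by auto
  then show ?thesis unfolding drop_st_def by simp
qed

lemma exc_fix_st_matches: "exc n t + fix_st n t = card {x\<in>{1..n}. x \<notin> T}"
proof -
  have "{x\<in>{1..n}. x \<notin> T} = {x\<in>{1..n}. t x > x} \<union> {x\<in>{1..n}. t x = x}"
  proof (rule set_eqI)
    fix x
    show "x \<in> {x\<in>{1..n}. x \<notin> T} \<longleftrightarrow> x \<in> {x\<in>{1..n}. t x > x} \<union> {x\<in>{1..n}. t x = x}"
      using matches_drop_iff[OF match bal, of x] by (cases "x \<in> {1..n}") auto
  qed
  moreover have "card ({x\<in>{1..n}. t x > x} \<union> {x\<in>{1..n}. t x = x}) = exc n t + fix_st n t"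
    unfolding exc_def fix_st_def by (rule card_Un_disjoint) auto
  ultimately show ?thesis by simp
qed

lemma card_filter_matches:
  assumes "\<And>x. x \<in> {1..n} \<Longrightarrow> x < inv t x \<longleftrightarrow> x \<in> B \<Longrightarrow> t x < x \<longleftrightarrow> x \<in> T \<Longrightarrow>
      inv t x = x \<longleftrightarrow> t x = x \<Longrightarrow> P x \<longleftrightarrow> Q x"
  shows "card {x\<in>{1..n}. P x} = card {x\<in>{1..n}. Q x}"
  using assms matches_inv_greater_iff matches_drop_iff[OF match bal] matches_fixed_inv_iff
  by (intro arg_cong[where f = card] Collect_cong) blast

lemma cpk_matches: "cpk n t = card {x\<in>{1..n}. x \<notin> B \<and> x \<in> T}"
  unfolding cpk_def by (rule card_filter_matches) auto

lemma cval_matches: "cval n t = card {x\<in>{1..n}. x \<in> B \<and> x \<notin> T}"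
  unfolding cval_def by (rule card_filter_matches) auto

lemma cdd_matches: "cdd n t = card {x\<in>{1..n}. x \<in> B \<and> x \<in> T}"
  unfolding cdd_def by (rule card_filter_matches) auto

lemma cda_matches: "cda n t = card {x\<in>{1..n}. x \<notin> B \<and> x \<notin> T \<and> t x \<noteq> x}"
  unfolding cda_def by (rule card_filter_matches) auto

end

lemma card_crossing_down_eq_up:
  assumes q: "is_perm n q"
  shows "card {j\<in>{1..n}. i < j \<and> q j \<le> i} = card {j\<in>{1..n}. j \<le> i \<and> i < q j}"
proof -
  let ?X = "{j\<in>{1..n}. j \<le> i}" and ?Y = "{j\<in>{1..n}. q j \<le> i}"
  have "card ?Y = card ?X" using card_filter_is_perm[OF q, of "\<lambda>x. x \<le> i"] by simp
  moreover have "card (?X - ?Y) = card ?X - card (?X \<inter> ?Y)" by (rule card_Diff_subset_Int) simp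
  moreover have "card (?Y - ?X) = card ?Y - card (?Y \<inter> ?X)" by (rule card_Diff_subset_Int) simp
  moreover have "?X - ?Y = {j\<in>{1..n}. j \<le> i \<and> i < q j}" by auto
  moreover have "?Y - ?X = {j\<in>{1..n}. i < j \<and> q j \<le> i}" by auto
  ultimately show ?thesis by (simp add: Int_commute)
qed

lemma sum_card_filter_swap:
  "finite S \<Longrightarrow> (\<Sum>i\<in>S. card {j\<in>S. P i j}) = (\<Sum>j\<in>S. card {i\<in>S. P i j})"
proof -
  assume fin: "finite S"
  have c: "card {j\<in>S. Q j} = (\<Sum>j\<in>S. if Q j then 1 else 0)" for Q :: "'a \<Rightarrow> bool"
    using fin by (simp add: sum.inter_filter[symmetric])
  show ?thesis unfolding c by (rule sum.swap)
qed

context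
  fixes n E F q
  assumes match: "matches n E F q" and exc: "\<And>x. x \<in> {1..n} \<Longrightarrow> x < q x \<longleftrightarrow> x \<in> E"
begin

lemma cros_term_matches:
  assumes i: "i \<in> {1..n}"
  shows "card {j\<in>{1..n}. (j < i \<and> i < q j \<and> q j < q i) \<or> (q i < q j \<and> q j \<le> i \<and> i < j)}
      + (if i \<in> E then 1 else 0) = card {j\<in>{1..n}. j \<le> i \<and> i < q j}"
proof -
  have mono: "strict_mono_on E q" "strict_mono_on ({1..n} - E) q"
    and E: "E \<subseteq> {1..n}" and q: "is_perm n q"
    using match permutes_is_perm unfolding matches_def by auto
  show ?thesis
  proof (cases "i \<in> E")
    case True
    then have qi: "i < q i" using exc[OF i] by simp
    have "{j\<in>{1..n}. (j < i \<and> i < q j \<and> q j < q i) \<or> (q i < q j \<and> q j \<le> i \<and> i < j)}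
        = {j\<in>{1..n}. j < i \<and> i < q j}"
    proof (intro equalityI subsetI)
      fix j assume "j \<in> {j\<in>{1..n}. j < i \<and> i < q j}"
      then have j: "j \<in> {1..n}" "j < i" "i < q j" by auto
      then have "j \<in> E" using exc[OF j(1)] by simp
      then have "q j < q i" using strict_mono_onD[OF mono(1) _ True j(2)] by simp
      then show "j \<in> {j\<in>{1..n}. (j < i \<and> i < q j \<and> q j < q i) \<or> (q i < q j \<and> q j \<le> i \<and> i < j)}"
        using j by simp
    qed (use qi in auto)
    moreover have "{j\<in>{1..n}. j \<le> i \<and> i < q j} = insert i {j\<in>{1..n}. j < i \<and> i < q j}"
      using exc[OF i] True i by auto
    ultimately show ?thesis using True by simp
  next
    case False
    then have qi: "q i \<le> i" using exc[OF i] by simp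
    have "{j\<in>{1..n}. (j < i \<and> i < q j \<and> q j < q i) \<or> (q i < q j \<and> q j \<le> i \<and> i < j)}
        = {j\<in>{1..n}. i < j \<and> q j \<le> i}"
    proof (intro equalityI subsetI)
      fix j assume "j \<in> {j\<in>{1..n}. i < j \<and> q j \<le> i}"
      then have j: "j \<in> {1..n}" "i < j" "q j \<le> i" by auto
      then have "j \<in> {1..n} - E" using exc[OF j(1)] by simp
      then have "q i < q j" using strict_mono_onD[OF mono(2) _ _ j(2)] False i by simp
      then show "j \<in> {j\<in>{1..n}. (j < i \<and> i < q j \<and> q j < q i) \<or> (q i < q j \<and> q j \<le> i \<and> i < j)}"
        using j by simp
    qed (use qi in auto)
    then show ?thesis
      using False card_crossing_down_eq_up[OF q, of i] by simp
  qed
qed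

lemma cros_matches: "cros n q + card E + \<Sum>E = \<Sum>F"
proof -
  have q: "q permutes {1..n}" and E: "E \<subseteq> {1..n}" and img: "q ` E = F"
    using match unfolding matches_def by auto
  have "cros n q + card E = (\<Sum>i\<in>{1..n}. card {j\<in>{1..n}. j \<le> i \<and> i < q j})"
  proof -
    have "card E = (\<Sum>i\<in>{1..n}. if i \<in> E then 1 else 0)"
      using E by (simp add: sum.If_cases Int_absorb1)
    then show ?thesis
      unfolding cros_def using cros_term_matches by (simp add: sum.distrib[symmetric])
  qed
  also have "\<dots> = (\<Sum>j\<in>{1..n}. card {i\<in>{1..n}. j \<le> i \<and> i < q j})"
    by (rule sum_card_filter_swap) simp
  also have "\<dots> = (\<Sum>j\<in>{1..n}. q j - j)"
  proof (rule sum.cong)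
    fix j assume j: "j \<in> {1..n}"
    then have "{i\<in>{1..n}. j \<le> i \<and> i < q j} = {j..<q j}"
      using is_perm_mem[OF permutes_is_perm[OF q] j] by auto
    then show "card {i\<in>{1..n}. j \<le> i \<and> i < q j} = q j - j" by simp
  qed simp
  also have "\<dots> = (\<Sum>j\<in>E. q j - j)"
  proof (rule sum.mono_neutral_right)
    show "\<forall>i\<in>{1..n} - E. q i - i = 0"
    proof
      fix i assume "i \<in> {1..n} - E"
      then have "\<not> i < q i" using exc[of i] by auto
      then show "q i - i = 0" by simp
    qed
  qed (use E in auto)
  finally have "cros n q + card E + \<Sum>E = (\<Sum>j\<in>E. q j - j + j)"
    by (simp add: sum.distrib)
  also have "\<dots> = (\<Sum>j\<in>E. q j)"
  proof (rule sum.cong)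
    fix j assume "j \<in> E"
    then have "j < q j" using exc[of j] E by auto
    then show "q j - j + j = q j" by simp
  qed simp
  also have "\<dots> = \<Sum>F"
    unfolding img[symmetric] by (simp add: sum.reindex permutes_inj_on[OF q])
  finally show ?thesis .
qed

end

lemma matches_tops_eq_drops:
  assumes match: "matches n T B t" and bal: "ballot n T B"
  shows "T = drops n t" "B = t ` drops n t"
proof -
  show T: "T = drops n t"
    using matches_drop_iff[OF match bal] match unfolding matches_def drops_def by blast
  show "B = t ` drops n t"
    using match unfolding matches_def T[symmetric] by simp
qed

lemma S231_of_is_perm:
  assumes perm: "is_perm n s" and av: "avoids231 n s"
  defines "s' \<equiv> \<lambda>i. if i \<in> {1..n} then s i else i"
  shows "s' \<in> S231 n" "desc_tops n s' = desc_tops n s" "desc_bots n s' = desc_bots n s"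
proof -
  have agree: "s' i = s i" if "1 \<le> i" "i \<le> n" for i using that by (simp add: s'_def)
  have "is_perm n s'" using perm by (rule bij_betw_cong[THEN iffD1, rotated]) (simp add: s'_def)
  then have "s' permutes {1..n}" by (rule bij_imp_permutes) (auto simp: s'_def)
  moreover have "avoids231 n s'"
  proof -
    have "(1 \<le> i \<and> i < j \<and> j < k \<and> k \<le> n \<and> s' k < s' i \<and> s' i < s' j) \<longleftrightarrow>
        (1 \<le> i \<and> i < j \<and> j < k \<and> k \<le> n \<and> s k < s i \<and> s i < s j)" for i j k
      using agree[of i] agree[of j] agree[of k] by auto
    then show ?thesis using av unfolding avoids231_def by simp
  qed
  ultimately show "s' \<in> S231 n" unfolding S231_def by simp
  have D: "descents n s' = descents n s"
    unfolding descents_def using agree by (intro Collect_cong) auto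
  show "desc_tops n s' = desc_tops n s"
    unfolding desc_tops_eq D using agree descents_memD by (intro image_cong) auto
  show "desc_bots n s' = desc_bots n s"
    unfolding desc_bots_eq D using agree descents_memD by (intro image_cong) auto
qed

context
  fixes n s
  assumes s: "s \<in> S231 n"
begin

lemma S231_perm: "s permutes {1..n}" and S231_avoids: "avoids231 n s"
  using s unfolding S231_def by auto

lemma S231_is_perm: "is_perm n s"
  by (rule permutes_is_perm[OF S231_perm])

lemma Phi_matches_S231: "matches n (desc_tops n s) (desc_bots n s) (Phi n s)"
  by (rule Phi_matches[OF S231_perm S231_avoids])

lemma ballot_S231: "ballot n (desc_tops n s) (desc_bots n s)"
  by (rule ballot_desc_tops_bots[OF S231_is_perm])

lemma Phi_permutes: "Phi n s permutes {1..n}"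
  using Phi_matches_S231 unfolding matches_def by simp

lemma Phi_fixed_iff:
  assumes x: "x \<in> {1..n}"
  shows "Phi n s x = x \<longleftrightarrow>
    x \<notin> desc_bots n s \<and> x \<notin> desc_tops n s \<and> straddles n s (x - 1) = 0"
proof -
  have "{y\<in>desc_bots n s. y < x} = {y\<in>desc_bots n s. y \<le> x - 1}"
    "{y\<in>desc_tops n s. y < x} = {y\<in>desc_tops n s. y \<le> x - 1}"
    using x by auto
  then have "card {y\<in>desc_bots n s. y < x} = card {y\<in>desc_tops n s. y < x}
      \<longleftrightarrow> straddles n s (x - 1) = 0"
    using count_le_desc_bots[OF S231_is_perm, of "x - 1"] unfolding count_le_def by simp
  then show ?thesis
    using matches_fixed_iff[OF Phi_matches_S231 ballot_S231 x] by auto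
qed

lemma fmax_eq_fix_st_Phi: "fmax n s = fix_st n (Phi n s)"
proof -
  let ?P = "\<lambda>x. x \<notin> desc_bots n s \<and> x \<notin> desc_tops n s \<and> straddles n s (x - 1) = 0"
  have "{i\<in>{1..n}. ext n s (i - 1) < ext n s i \<and> ext n s i < ext n s (i + 1)
        \<and> (\<forall>j. 1 \<le> j \<and> j < i \<longrightarrow> s j < s i)} = {i\<in>{1..n}. ?P (s i)}"
    using ext_neighbour_iffs[OF S231_is_perm]
      left_to_right_max_iff[OF S231_is_perm S231_avoids] by blast
  moreover have "{x\<in>{1..n}. Phi n s x = x} = {x\<in>{1..n}. ?P x}"
    using Phi_fixed_iff by blast
  ultimately show ?thesis
    unfolding fmax_def fix_st_def using card_filter_is_perm[OF S231_is_perm, of ?P] by simp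
qed

lemma icr_Phi: "icr n (Phi n s) + card (desc_bots n s) + \<Sum>(desc_bots n s) = \<Sum>(desc_tops n s)"
  unfolding icr_def
  by (rule cros_matches[OF matches_inv[OF Phi_matches_S231]
        matches_inv_greater_iff[OF Phi_matches_S231 ballot_S231]])

lemma lda_minus_fmax_Phi: "lda n s - fmax n s = cda n (Phi n s)"
proof -
  let ?DA = "{x\<in>{1..n}. x \<notin> desc_bots n s \<and> x \<notin> desc_tops n s}"
    and ?F = "{x\<in>{1..n}. Phi n s x = x}"
  have "?F \<subseteq> ?DA" using Phi_fixed_iff by auto
  moreover have "{x\<in>{1..n}. x \<notin> desc_bots n s \<and> x \<notin> desc_tops n s \<and> Phi n s x \<noteq> x} = ?DA - ?F"
    by auto
  ultimately show ?thesis
    using cda_matches[OF Phi_matches_S231 ballot_S231] lda_eq[OF S231_is_perm]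
      fmax_eq_fix_st_Phi card_Diff_subset[of ?F ?DA] unfolding fix_st_def by simp
qed

end

lemma Phi_inj_on: "inj_on (Phi n) (S231 n)"
proof (rule inj_onI)
  fix s1 s2 assume s1: "s1 \<in> S231 n" and s2: "s2 \<in> S231 n" and eq: "Phi n s1 = Phi n s2"
  have tops: "desc_tops n s1 = desc_tops n s2" and bots: "desc_bots n s1 = desc_bots n s2"
    using matches_tops_eq_drops[OF Phi_matches_S231[OF s1] ballot_S231[OF s1]]
      matches_tops_eq_drops[OF Phi_matches_S231[OF s2] ballot_S231[OF s2]] eq by simp_all
  show "s1 = s2"
  proof
    fix i
    show "s1 i = s2 i"
    proof (cases "i \<in> {1..n}")
      case True
      then show ?thesis
        using avoids231_eq_if_desc_tops_bots_eq[OF S231_is_perm[OF s1] S231_avoids[OF s1]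
            S231_is_perm[OF s2] S231_avoids[OF s2] tops bots] by blast
    next
      case False
      then show ?thesis using S231_perm[OF s1] S231_perm[OF s2] unfolding permutes_def by simp
    qed
  qed
qed

lemma Phi_S231_subset: "Phi n ` S231 n \<subseteq> S321 n"
  using Phi_permutes matches_avoids321[OF Phi_matches_S231] unfolding S321_def by blast

lemma S321_subset_Phi_S231: "S321 n \<subseteq> Phi n ` S231 n"
proof
  fix t assume "t \<in> S321 n"
  then have t: "t permutes {1..n}" "avoids321 n t" unfolding S321_def by auto
  obtain s0 where s0: "is_perm n s0" "avoids231 n s0"
    "desc_tops n s0 = drops n t" "desc_bots n s0 = t ` drops n t"
    using ballot_realised_by_avoids231[OF ballot_drops[OF t(1)]] by blast
  define s where "s = (\<lambda>i. if i \<in> {1..n} then s0 i else i)"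
  note s = S231_of_is_perm[OF s0(1,2), folded s_def]
  have "matches n (drops n t) (t ` drops n t) (Phi n s)"
    using Phi_matches_S231[OF s(1)] s(2,3) s0(3,4) by simp
  then have "Phi n s = t"
    using matches_unique matches_drops[OF t] by blast
  then show "t \<in> Phi n ` S231 n" using s(1) by blast
qed

theorem Phi_bij_betw: "bij_betw (Phi n) (S231 n) (S321 n)"
  unfolding bij_betw_def using Phi_inj_on Phi_S231_subset S321_subset_Phi_S231 by blast

lemma Phi_statistics:
  assumes s: "s \<in> S231 n"
  shows "(st312 n s, des n s, asc_inf n s, lda n s - fmax n s, ldd n s, lval n s, lpk n s, fmax n s)
    = (icr n (Phi n s), drop_st n (Phi n s), exc n (Phi n s) + fix_st n (Phi n s), cda n (Phi n s),
       cdd n (Phi n s), cval n (Phi n s), cpk n (Phi n s), fix_st n (Phi n s))"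
proof -
  note perm = S231_is_perm[OF s] and match = Phi_matches_S231[OF s] and bal = ballot_S231[OF s]
  have "st312 n s = icr n (Phi n s)"
    using st312_avoids231[OF perm S231_avoids[OF s]] icr_Phi[OF s] ballot_subsets(3)[OF bal] by simp
  then show ?thesis
    using des_eq[OF perm] asc_inf_eq[OF perm] ldd_eq[OF perm] lval_eq[OF perm] lpk_eq[OF perm]
      drop_st_matches[OF match bal] exc_fix_st_matches[OF match bal] cdd_matches[OF match bal]
      cval_matches[OF match bal] cpk_matches[OF match bal] lda_minus_fmax_Phi[OF s]
      fmax_eq_fix_st_Phi[OF s]
    by simp
qed

lemma inv_statistics:
  assumes "t permutes {1..n}"
  shows "(icr n t, drop_st n t, exc n t + fix_st n t, cda n t, cdd n t, cval n t, cpk n t, fix_st n t)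
    = (cros n (inv t), exc n (inv t), drop_st n (inv t) + fix_st n (inv t),
       cdd n (inv t), cda n (inv t), cval n (inv t), cpk n (inv t), fix_st n (inv t))"
  using assms by (simp add: icr_def exc_inv drop_st_inv fix_st_inv cdd_inv cda_inv cval_inv cpk_inv)

theorem theorem2p11:
  fixes n :: nat
  assumes "n \<ge> 1"
  shows "bij_betw (Phi n) (S231 n) (S321 n) \<and>
    (\<forall>s \<in> S231 n.
      (st312 n s, des n s, asc_inf n s, lda n s - fmax n s, ldd n s, lval n s, lpk n s, fmax n s)
      = (icr n (Phi n s), drop_st n (Phi n s), exc n (Phi n s) + fix_st n (Phi n s), cda n (Phi n s),
         cdd n (Phi n s), cval n (Phi n s), cpk n (Phi n s), fix_st n (Phi n s))
    \<and> (icr n (Phi n s), drop_st n (Phi n s), exc n (Phi n s) + fix_st n (Phi n s), cda n (Phi n s),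
         cdd n (Phi n s), cval n (Phi n s), cpk n (Phi n s), fix_st n (Phi n s))
      = (cros n (inv (Phi n s)), exc n (inv (Phi n s)), drop_st n (inv (Phi n s)) + fix_st n (inv (Phi n s)),
         cdd n (inv (Phi n s)), cda n (inv (Phi n s)), cval n (inv (Phi n s)), cpk n (inv (Phi n s)),
         fix_st n (inv (Phi n s))))"
  using Phi_bij_betw Phi_statistics inv_statistics[OF Phi_permutes] by blast

end
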